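(* Let $j\ge 3$. For $c\in(0,1)$ and $d>0$ let $$v(c,d)=\frac d2\Bigl((c-1)j\ln(1-c)-2c\ln c+(1+c)(2-j)(1-\ln d)\Bigr),$$ and let $\bar\beta_j$ be the unique $d>0$ such that $\sup_{c\in(0,1)}v(c,d)=0$ (equivalently, the positive root of $v(d)$, where $v(d)=\max_{c}v(c,d)$ is attained at $d=(1-c)^{-j/(j-2)}c^{2/(j-2)}$). With $E_{n,j,k}$ as defined in the context, for every $\theta\in(0,1)$ there exists $K<\infty$ such that for all integers $k\ge K$, $$\lim_{n\to\infty,\ k\mid n}\ \sum_{b=1}^{\lfloor \theta\bar\beta_j (k-1)^{-j/(j-2)}n\rfloor}\ \sum_{a=0}^{n-b}E_{n,j,k}\!\left(\tfrac an,\tfrac bn\right)=0.$$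
   Context: Let $g_k(x,y)=(1+x+y)^k-ky-\bigl((1+x)^k-1\bigr)$. For $n$ a multiple of $k$ and integers $a,b\ge0$ with $a+b\le n$, $E_{n,j,k}(a/n,b/n)=\binom{n}{a,\,b,\,n-a-b}S_{n,j,k}(a,b)\big/\binom{nj}{ja,\,jb,\,j(n-a-b)}$ with $S_{n,j,k}(a,b)$ the coefficient of $x^{ja}y^{jb}$ in $g_k(x,y)^{nj/k}$. This is the average number of LM1 stopping sets (for verification decoding on the $q$-ary symmetric channel) with $a$ correct and $b$ incorrect unverified variable nodes in a random $(j,k)$-regular LDPC code of length $n$; the vanishing of the sum means that, with high probability, LM1 corrects all error patterns of size below $\theta\bar\beta_j(k-1)^{-j/(j-2)}n$ when no false verification occurs. *)

theory Defs
  imports "HOL-Analysis.Analysis" "HOL-Computational_Algebra.Polynomial"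
begin

text \<open>Bivariate polynomials in x, y are represented as polynomials in y whose
coefficients are polynomials in x (type real poly poly).
g_k(x,y) = (1+x+y)^k - k y - ((1+x)^k - 1).\<close>
definition g_poly :: "nat \<Rightarrow> real poly poly" where
  "g_poly k = [: [:1, 1:], 1 :] ^ k - [: 0, [: of_nat k :] :]
              - [: [:1, 1:] ^ k - 1 :]"

definition S_coeff :: "nat \<Rightarrow> nat \<Rightarrow> nat \<Rightarrow> nat \<Rightarrow> nat \<Rightarrow> real" where
  "S_coeff n j k a b = coeff (coeff (g_poly k ^ (n * j div k)) (j * b)) (j * a)"

text \<open>Trinomial coefficient n!/(a! b! (n-a-b)!), used for a+b \<le> n.\<close>
definition trinom :: "nat \<Rightarrow> nat \<Rightarrow> nat \<Rightarrow> real" where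
  "trinom n a b = fact n / (fact a * fact b * fact (n - a - b))"

text \<open>E_{n,j,k}(a/n, b/n), written as a function of the integers a, b.\<close>
definition E_val :: "nat \<Rightarrow> nat \<Rightarrow> nat \<Rightarrow> nat \<Rightarrow> nat \<Rightarrow> real" where
  "E_val n j k a b = trinom n a b * S_coeff n j k a b / trinom (n * j) (j * a) (j * b)"

definition v_fun :: "nat \<Rightarrow> real \<Rightarrow> real \<Rightarrow> real" where
  "v_fun j c d = d / 2 * ((c - 1) * real j * ln (1 - c) - 2 * c * ln c
                          + (1 + c) * (2 - real j) * (1 - ln d))"

definition beta_bar :: "nat \<Rightarrow> real" where
  "beta_bar j = (THE d. d > 0 \<and> (SUP c\<in>{0<..<1}. v_fun j c d) = 0)"

end

theory Submission
  imports Defs "HOL-Real_Asymp.Real_Asymp"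
begin

(* For fixed k the double sum is shown to be O(n^(-1/8)); it is nonnegative, so it tends to 0.

   1. Coefficient extraction.  g_k has nonnegative coefficients and only monomials x^s y^t with
      s <= (k-1) t, so S(a, b) vanishes for a > (k-1) b, and otherwise the saddle-point bound
      [x^s y^t] g^m <= g(x,y)^m / (x^s y^t) together with g <= 1 + g_excess <= exp g_excess
      applies at any x, y > 0.
   2. Stirling-type bounds for the trinomial coefficients give E <= poly(a,b) exp(saddle_exponent).
   3. beta_bar is characterised through v_sup, the supremum of the bracket of v: it is
      well defined, ln beta_bar <= 1 and the bracket is nonpositive at L = ln beta_bar.
   4. With p = a/b two choices of saddle point (p small / p large) show saddle_exponent <= b D / 4,
      where D = ln(b/n) + j/(j-2) ln k - ln beta_bar <= - gap theta on the summation range,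
      provided k is large (large_k).
   5. Summing the resulting bound poly(b) exp(- gap b / 8) n^(-1/8) over a and b gives the theorem. *)

definition biv_eval :: "real \<Rightarrow> real \<Rightarrow> real poly poly \<Rightarrow> real" where
  "biv_eval x y P = poly (poly P [:y:]) x"

lemma biv_eval_power: "biv_eval x y (P ^ n) = biv_eval x y P ^ n"
  by (simp add: biv_eval_def)

lemma biv_eval_by_rows: "biv_eval x y P = poly (map_poly (\<lambda>q. poly q x) P) y"
  by (induction P) (simp_all add: biv_eval_def map_poly_pCons)

lemma biv_eval_g: "biv_eval x y (g_poly k) = (1 + x + y) ^ k - real k * y - ((1 + x) ^ k - 1)"
  by (simp add: biv_eval_def g_poly_def of_nat_poly algebra_simps)

definition nonneg_coeffs :: "real poly poly \<Rightarrow> bool" where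
  "nonneg_coeffs P \<longleftrightarrow> (\<forall>t s. 0 \<le> coeff (coeff P t) s)"

lemma nonneg_coeffs_mult: "nonneg_coeffs P \<Longrightarrow> nonneg_coeffs Q \<Longrightarrow> nonneg_coeffs (P * Q)"
  unfolding nonneg_coeffs_def
  by (auto simp: coeff_mult coeff_sum intro!: sum_nonneg mult_nonneg_nonneg)

lemma nonneg_coeffs_power:
  assumes "nonneg_coeffs P" shows "nonneg_coeffs (P ^ n)"
proof (induction n)
  case 0 show ?case by (simp add: nonneg_coeffs_def coeff_1)
next
  case (Suc n) then show ?case by (simp add: nonneg_coeffs_mult assms)
qed

lemma coeff_times_power_le_poly:
  fixes q :: "real poly"
  assumes "\<And>i. 0 \<le> coeff q i" and "0 \<le> x"
  shows "coeff q s * x ^ s \<le> poly q x"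
proof (cases "s \<le> degree q")
  case True
  then show ?thesis unfolding poly_altdef by (intro member_le_sum) (use assms in auto)
next
  case False
  then have "coeff q s = 0" by (simp add: coeff_eq_0)
  then show ?thesis unfolding poly_altdef using assms by (auto intro!: sum_nonneg)
qed

lemma coeff_le_biv_eval:
  assumes "nonneg_coeffs P" and "0 \<le> x" and "0 \<le> y"
  shows "coeff (coeff P t) s * x ^ s * y ^ t \<le> biv_eval x y P"
proof -
  have coeffs: "0 \<le> coeff (coeff P t') s'" for t' s'
    using assms(1) by (auto simp: nonneg_coeffs_def)
  have rows: "0 \<le> poly (coeff P t') x" for t'
    unfolding poly_altdef using coeffs assms(2) by (auto intro!: sum_nonneg)
  have "coeff (coeff P t) s * x ^ s * y ^ t \<le> poly (coeff P t) x * y ^ t"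
    using coeff_times_power_le_poly[of "coeff P t" x s] coeffs assms by (simp add: mult_right_mono)
  also have "\<dots> \<le> biv_eval x y P"
    unfolding biv_eval_by_rows
    using coeff_times_power_le_poly[of "map_poly (\<lambda>q. poly q x) P" y t] rows assms(3)
    by (simp add: coeff_map_poly)
  finally show ?thesis .
qed

(* The polynomial 1 + x, named so that its powers are not unfolded by the simplifier. *)
definition one_plus_x :: "real poly" where "one_plus_x = [:1, 1:]"

lemma degree_one_plus_x_power: "degree (one_plus_x ^ i) \<le> i"
  unfolding one_plus_x_def using degree_power_le[of "[:1, 1:] :: real poly" i] by simp

lemma coeff_one_plus_x_power:
  "coeff (one_plus_x ^ i) s = (if s \<le> i then real (i choose s) else 0)"
  using degree_one_plus_x_power[of i]
  by (auto simp: one_plus_x_def coeff_linear_poly_power intro!: coeff_eq_0)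

lemma coeff_g_poly:
  "coeff (g_poly k) t =
     (if t = 0 then 1 else if t = 1 then of_nat k * one_plus_x ^ (k - 1) - [:of_nat k:]
      else if t \<le> k then of_nat (k choose t) * one_plus_x ^ (k - t) else 0)"
proof -
  have "degree ([:one_plus_x, 1:] ^ k) \<le> k"
    using degree_power_le[of "[:one_plus_x, 1:]" k] by simp
  then have binomial: "coeff ([:one_plus_x, 1:] ^ k) t
      = (if t \<le> k then of_nat (k choose t) * one_plus_x ^ (k - t) else 0)"
    by (auto simp: coeff_linear_poly_power intro!: coeff_eq_0)
  show ?thesis
    unfolding g_poly_def one_plus_x_def[symmetric]
    using binomial by (auto simp: coeff_pCons split: nat.splits)
qed

(* g_k has nonnegative coefficients (the subtracted terms cancel against the expansion). *)
lemma nonneg_coeffs_g: "nonneg_coeffs (g_poly k)"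
  unfolding nonneg_coeffs_def
proof (intro allI)
  fix t s
  have pos: "0 \<le> coeff (one_plus_x ^ i) s'" for i s' by (simp add: coeff_one_plus_x_power)
  show "0 \<le> coeff (coeff (g_poly k) t) s"
  proof (cases "t = 1")
    case True
    have "coeff (of_nat k * one_plus_x ^ (k - 1) - [:of_nat k:]) s
          = of_nat k * coeff (one_plus_x ^ (k - 1)) s - (if s = 0 then of_nat k else 0)"
      by (simp add: of_nat_poly coeff_pCons split: nat.splits)
    moreover have "coeff (one_plus_x ^ (k - 1)) 0 = 1" by (simp add: coeff_one_plus_x_power)
    ultimately show ?thesis using True pos[of "k - 1" s] by (auto simp: coeff_g_poly)
  next
    case False
    then show ?thesis using pos by (auto simp: coeff_g_poly of_nat_poly coeff_1)
  qed
qed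

definition x_degree_le :: "nat \<Rightarrow> real poly poly \<Rightarrow> bool" where
  "x_degree_le w P \<longleftrightarrow> (\<forall>t. degree (coeff P t) \<le> w * t)"

lemma x_degree_le_mult:
  assumes P: "x_degree_le w P" and Q: "x_degree_le w Q"
  shows "x_degree_le w (P * Q)"
  unfolding x_degree_le_def
proof
  fix t
  show "degree (coeff (P * Q) t) \<le> w * t"
    unfolding coeff_mult
  proof (rule degree_sum_le)
    fix i assume "i \<in> {..t}"
    then have "w * i + w * (t - i) = w * t" by (simp add: diff_mult_distrib2)
    then show "degree (coeff P i * coeff Q (t - i)) \<le> w * t"
      using degree_mult_le[of "coeff P i" "coeff Q (t - i)"] P Q unfolding x_degree_le_def
      by (metis add_le_mono order.trans)
  qed simp
qed

lemma x_degree_le_power: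
  assumes "x_degree_le w P" shows "x_degree_le w (P ^ n)"
proof (induction n)
  case 0 show ?case by (simp add: x_degree_le_def coeff_1)
next
  case (Suc n) then show ?case by (simp add: x_degree_le_mult assms)
qed

lemma x_degree_le_g: "x_degree_le (k - 1) (g_poly k)"
  unfolding x_degree_le_def
proof
  fix t :: nat
  have smult_deg: "degree (of_nat c * one_plus_x ^ i :: real poly) \<le> i" for c i
    by (auto simp: of_nat_poly intro: order.trans[OF degree_smult_le] degree_one_plus_x_power)
  consider "t = 0" | "t = 1" | "2 \<le> t" by linarith
  then show "degree (coeff (g_poly k) t) \<le> (k - 1) * t"
  proof cases
    case 2
    have "degree (of_nat k * one_plus_x ^ (k - 1) - [:of_nat k:] :: real poly) \<le> k - 1"
      by (rule order.trans[OF degree_diff_le_max]) (auto intro: smult_deg)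
    then show ?thesis using 2 by (simp add: coeff_g_poly)
  next
    case 3
    then have "k - t \<le> k - 1" and "k - 1 \<le> (k - 1) * t" by simp_all
    then have "k - t \<le> (k - 1) * t" by (rule order.trans)
    then show ?thesis using 3 smult_deg[of "k choose t" "k - t"] by (auto simp: coeff_g_poly)
  qed (simp add: coeff_g_poly)
qed

lemma coeff_vanishes_if_x_degree_le:
  "x_degree_le w P \<Longrightarrow> w * t < s \<Longrightarrow> coeff (coeff P t) s = 0"
  unfolding x_degree_le_def by (meson coeff_eq_0 le_less_trans)

lemma taylor_power_remainder:
  fixes u y :: real
  assumes "0 \<le> u" "0 \<le> y"
  shows "(u + y) ^ (k + 2) - u ^ (k + 2) - real (k + 2) * u ^ (k + 1) * y
         \<le> (real (k + 2) * real (k + 1) / 2) * y\<^sup>2 * (u + y) ^ k"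
proof (induction k)
  case 0 then show ?case by (simp add: power2_eq_square algebra_simps)
next
  case (Suc k)
  have split: "(u + y) ^ (Suc k + 2) - u ^ (Suc k + 2) - real (Suc k + 2) * u ^ (Suc k + 1) * y
     = (u + y) * ((u + y) ^ (k + 2) - u ^ (k + 2) - real (k + 2) * u ^ (k + 1) * y)
       + real (k + 2) * u ^ (k + 1) * y\<^sup>2"
    by (simp add: algebra_simps power2_eq_square)
  have "(u + y) * ((u + y) ^ (k + 2) - u ^ (k + 2) - real (k + 2) * u ^ (k + 1) * y)
        \<le> (u + y) * ((real (k + 2) * real (k + 1) / 2) * y\<^sup>2 * (u + y) ^ k)"
    by (rule mult_left_mono[OF Suc]) (use assms in simp)
  moreover have "u ^ (k + 1) \<le> (u + y) ^ (k + 1)" by (rule power_mono) (use assms in auto)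
  then have "real (k + 2) * u ^ (k + 1) * y\<^sup>2 \<le> real (k + 2) * (u + y) ^ (k + 1) * y\<^sup>2"
    by (intro mult_right_mono mult_left_mono) auto
  ultimately have "(u + y) ^ (Suc k + 2) - u ^ (Suc k + 2) - real (Suc k + 2) * u ^ (Suc k + 1) * y
      \<le> (u + y) * ((real (k + 2) * real (k + 1) / 2) * y\<^sup>2 * (u + y) ^ k)
        + real (k + 2) * (u + y) ^ (k + 1) * y\<^sup>2"
    unfolding split by linarith
  also have "\<dots> = (real (Suc k + 2) * real (Suc k + 1) / 2) * y\<^sup>2 * (u + y) ^ Suc k"
    by (simp add: algebra_simps)
  finally show ?case .
qed

(* Upper bound for g_k(x, y) - 1 obtained from the Taylor bound, as a function of real K = k. *)
definition g_excess :: "real \<Rightarrow> real \<Rightarrow> real \<Rightarrow> real" where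
  "g_excess K x y = K * y * (exp ((K - 1) * x) - 1)
                    + (K * (K - 1) / 2) * y\<^sup>2 * exp ((K - 2) * (x + y))"

lemma g_le_one_plus_excess:
  assumes "2 \<le> k" "0 \<le> x" "0 \<le> y"
  shows "biv_eval x y (g_poly k) \<le> 1 + g_excess (real k) x y"
proof -
  obtain l where l: "k = l + 2" using assms(1) by (metis add.commute le_Suc_ex)
  have taylor: "(1 + x + y) ^ k - (1 + x) ^ k - real k * (1 + x) ^ (k - 1) * y
      \<le> (real k * (real k - 1) / 2) * y\<^sup>2 * (1 + x + y) ^ (k - 2)"
    using taylor_power_remainder[of "1 + x" y l] assms unfolding l by (simp add: add_ac)
  have "(1 + x) ^ (k - 1) \<le> exp x ^ (k - 1)"
    by (rule power_mono) (use assms in \<open>auto simp: add.commute\<close>)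
  also have "\<dots> = exp ((real k - 1) * x)"
    unfolding exp_of_nat_mult[symmetric] using assms(1) by (simp add: of_nat_diff)
  finally have linear: "real k * (1 + x) ^ (k - 1) * y \<le> real k * exp ((real k - 1) * x) * y"
    using assms by (intro mult_right_mono mult_left_mono) auto
  have "(1 + x + y) ^ (k - 2) \<le> exp (x + y) ^ (k - 2)"
    by (rule power_mono) (use assms exp_ge_add_one_self[of "x + y"] in \<open>auto simp: add_ac\<close>)
  also have "\<dots> = exp ((real k - 2) * (x + y))"
    unfolding exp_of_nat_mult[symmetric] using assms(1) by (simp add: of_nat_diff)
  finally have quadratic: "(real k * (real k - 1) / 2) * y\<^sup>2 * (1 + x + y) ^ (k - 2)
      \<le> (real k * (real k - 1) / 2) * y\<^sup>2 * exp ((real k - 2) * (x + y))"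
    using assms by (intro mult_left_mono) auto
  have excess: "g_excess (real k) x y = real k * exp ((real k - 1) * x) * y - real k * y
       + (real k * (real k - 1) / 2) * y\<^sup>2 * exp ((real k - 2) * (x + y))"
    unfolding g_excess_def by (simp add: algebra_simps)
  show ?thesis unfolding biv_eval_g excess using taylor linear quadratic by linarith
qed

lemma S_nonneg: "0 \<le> S_coeff n j k a b"
  unfolding S_coeff_def using nonneg_coeffs_power[OF nonneg_coeffs_g] by (simp add: nonneg_coeffs_def)

lemma S_vanishes:
  assumes "(k - 1) * (j * b) < j * a" shows "S_coeff n j k a b = 0"
  unfolding S_coeff_def
  by (rule coeff_vanishes_if_x_degree_le[OF x_degree_le_power[OF x_degree_le_g] assms])

(* Saddle-point bound for S: with 1 + z <= exp z applied to g_k <= 1 + g_excess. *)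
lemma S_bound:
  assumes k: "2 \<le> k" and x: "0 \<le> x" and y: "0 < y" and ax: "a = 0 \<or> 0 < x"
  shows "S_coeff n j k a b
         \<le> exp (real (n * j div k) * g_excess (real k) x y - real (j * a) * ln x - real (j * b) * ln y)"
proof -
  define m where "m = n * j div k"
  have g_pos: "1 \<le> biv_eval x y (g_poly k)"
    using coeff_le_biv_eval[OF nonneg_coeffs_g[of k] x, of y 0 0] y by (simp add: coeff_g_poly)
  have "biv_eval x y (g_poly k) \<le> exp (g_excess (real k) x y)"
    using g_le_one_plus_excess[OF k x, of y] y exp_ge_add_one_self[of "g_excess (real k) x y"] by linarith
  then have "biv_eval x y (g_poly k ^ m) \<le> exp (g_excess (real k) x y) ^ m"
    unfolding biv_eval_power by (rule power_mono) (use g_pos in simp)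
  then have bound: "S_coeff n j k a b * (x ^ (j * a) * y ^ (j * b)) \<le> exp (real m * g_excess (real k) x y)"
    using coeff_le_biv_eval[OF nonneg_coeffs_power[OF nonneg_coeffs_g[of k], of m] x, of y "j * b" "j * a"] y
    unfolding S_coeff_def m_def by (simp add: mult.assoc exp_of_nat_mult[symmetric])
  have power_as_exp: "z ^ i = exp (real i * ln z)" if "0 < z" for z :: real and i
    using that by (simp add: exp_of_nat_mult)
  have monomial: "x ^ (j * a) * y ^ (j * b) = exp (real (j * a) * ln x + real (j * b) * ln y)"
    using ax y power_as_exp[of y "j * b"] power_as_exp[of x "j * a"]
    by (cases "a = 0") (auto simp: exp_add)
  have "S_coeff n j k a b \<le> exp (real m * g_excess (real k) x y) / exp (real (j * a) * ln x + real (j * b) * ln y)"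
    using bound unfolding monomial by (simp add: pos_le_divide_eq)
  then show ?thesis unfolding m_def by (simp add: exp_diff[symmetric] algebra_simps)
qed

lemma E_nonneg: "0 \<le> E_val n j k a b"
  unfolding E_val_def trinom_def by (intro divide_nonneg_pos mult_nonneg_nonneg S_nonneg) auto

lemma E_vanishes:
  assumes "1 \<le> j" and "(k - 1) * b < a" shows "E_val n j k a b = 0"
proof -
  have "j * ((k - 1) * b) < j * a" using assms by simp
  then have "(k - 1) * (j * b) < j * a" by (metis mult.left_commute)
  then show ?thesis unfolding E_val_def by (simp add: S_vanishes)
qed

lemma ln_fact_lower: "real a * ln (real a) - real a \<le> ln (fact a)"
proof (induction a)
  case 0 then show ?case by simp
next
  case (Suc N)
  have "real N * (ln (real N + 1) - ln (real N)) \<le> 1"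
  proof (cases "N = 0")
    case False
    then have "1 + 1 / real N = (real N + 1) / real N" by (simp add: field_simps)
    then have "ln (real N + 1) - ln N = ln (1 + 1 / real N)" using False by (simp add: ln_div)
    also have "\<dots> \<le> 1 / real N" by (rule ln_add_one_self_le_self) simp
    finally show ?thesis using False by (simp add: field_simps)
  qed simp
  moreover have "ln (fact (Suc N)) = ln (real N + 1) + ln (fact N)"
    by (simp add: ln_mult add.commute)
  ultimately show ?case using Suc.IH by (simp add: algebra_simps)
qed

lemma ln_fact_upper: "ln (fact a) \<le> 1 + ln (real a + 1) + real a * ln (real a) - real a"
proof -
  have sharper: "ln (fact a) \<le> 1 + (real a + 1) * ln (real a) - real a" if "1 \<le> a"
    using that
  proof (induction a rule: dec_induct)
    case base then show ?case by simp
  next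
    case (step N)
    have N: "0 < real N" using step by simp
    have "1 / (real N + 1) \<le> - ln (1 - 1 / (real N + 1))"
      using ln_le_minus_one[of "1 - 1 / (real N + 1)"] N by (simp add: field_simps)
    also have "1 - 1 / (real N + 1) = real N / (real N + 1)" using N by (simp add: field_simps)
    then have "- ln (1 - 1 / (real N + 1)) = ln (real N + 1) - ln N" using N by (simp add: ln_div)
    finally have "1 \<le> (real N + 1) * (ln (real N + 1) - ln N)" using N by (simp add: field_simps)
    moreover have "ln (fact (Suc N)) = ln (real N + 1) + ln (fact N)"
      by (simp add: ln_mult add.commute)
    ultimately show ?case using step.IH by (simp add: algebra_simps)
  qed
  show ?thesis
  proof (cases "a = 0")
    case False
    have "ln (real a) \<le> ln (real a + 1)" using False by simp
    moreover have "(real a + 1) * ln (real a) = real a * ln (real a) + ln (real a)"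
      by (simp add: algebra_simps)
    ultimately show ?thesis using sharper False by linarith
  qed simp
qed

lemma fact_times_power_le_fact: "fact m * real m ^ r \<le> fact (m + r)"
proof (induction r)
  case 0 then show ?case by simp
next
  case (Suc r)
  have "fact m * real m ^ Suc r = (fact m * real m ^ r) * real m" by simp
  also have "\<dots> \<le> fact (m + r) * real (Suc (m + r))"
    by (rule mult_mono) (use Suc in auto)
  also have "\<dots> = fact (m + Suc r)" by (simp add: algebra_simps)
  finally show ?case .
qed

lemma fact_le_fact_times_power: "r \<le> n \<Longrightarrow> fact n \<le> fact (n - r) * real n ^ r"
proof (induction r)
  case 0 then show ?case by simp
next
  case (Suc r)
  then have r: "r < n" by simp
  have "fact (n - r) = real (n - r) * fact (n - Suc r)"
    using r by (metis Suc_diff_Suc fact_Suc of_nat_fact)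
  then have "fact n \<le> real (n - r) * fact (n - Suc r) * real n ^ r" using Suc r by simp
  also have "\<dots> \<le> real n * fact (n - Suc r) * real n ^ r"
    by (intro mult_right_mono) auto
  finally show ?case by (simp add: algebra_simps)
qed

definition trinom_ratio_exponent :: "nat \<Rightarrow> nat \<Rightarrow> nat \<Rightarrow> nat \<Rightarrow> real" where
  "trinom_ratio_exponent n j a b = 2 + ln (real (j * a) + 1) + ln (real (j * b) + 1)
     + (real j - 1) * (real a * ln (real a) - real a) + (real j - 1) * (real b * ln (real b) - real b)
     + (real a + real b) * ln (real n) - real j * (real a + real b) * ln (real n - real a - real b)"

lemma trinom_ratio_bound:
  assumes ab: "a + b < n" and j: "1 \<le> j"
  shows "trinom n a b / trinom (n * j) (j * a) (j * b) \<le> exp (trinom_ratio_exponent n j a b)"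
proof -
  define m where "m = j * (n - a - b)"
  have nm: "n * j - j * a - j * b = m" unfolding m_def using ab by (simp add: algebra_simps diff_mult_distrib2)
  have mpos: "0 < m" unfolding m_def using ab j by simp
  have "j * (n - a - b + (a + b)) = j * n" using ab by simp
  then have mr: "m + j * (a + b) = n * j" unfolding m_def add_mult_distrib2 by (simp add: mult.commute)
  have ln_m: "ln (real m) = ln (real j) + ln (real n - real a - real b)"
    unfolding m_def using ab j by (simp add: ln_mult of_nat_diff)
  have xlnx_scaled: "real (j * c) * ln (real (j * c)) = real j * real c * ln (real j) + real j * (real c * ln (real c))" for c
    by (cases "c = 0 \<or> j = 0") (auto simp: ln_mult algebra_simps)
  have t1: "ln (trinom n a b) = ln (fact n) - ln (fact a) - ln (fact b) - ln (fact (n - a - b))"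
    unfolding trinom_def by (simp add: ln_div ln_mult)
  have t2: "ln (trinom (n * j) (j * a) (j * b)) = ln (fact (n * j)) - ln (fact (j * a)) - ln (fact (j * b)) - ln (fact m)"
    unfolding trinom_def nm by (simp add: ln_div ln_mult)
  have f1: "ln (fact n) \<le> ln (fact (n - a - b)) + (real a + real b) * ln (real n)"
  proof -
    have "fact n \<le> fact (n - (a + b)) * real n ^ (a + b)" by (rule fact_le_fact_times_power) (use ab in simp)
    then have "ln (fact n) \<le> ln (fact (n - (a + b)) * real n ^ (a + b))"
      using ab by (subst ln_le_cancel_iff) auto
    also have "\<dots> = ln (fact (n - a - b)) + (real a + real b) * ln (real n)"
      using ab by (simp add: ln_mult ln_realpow)
    finally show ?thesis .
  qed
  have f2: "ln (fact m) + real (j * (a + b)) * ln (real m) \<le> ln (fact (n * j))"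
  proof -
    have "fact m * real m ^ (j * (a + b)) \<le> fact (n * j)" using fact_times_power_le_fact[of m "j * (a + b)"] mr by simp
    then have "ln (fact m * real m ^ (j * (a + b))) \<le> ln (fact (n * j))"
      using mpos by (subst ln_le_cancel_iff) auto
    then show ?thesis using mpos by (simp add: ln_mult ln_realpow)
  qed
  have ua: "ln (fact (j * a)) \<le> 1 + ln (real (j * a) + 1) + real j * real a * ln (real j) + real j * (real a * ln (real a)) - real j * real a"
    using ln_fact_upper[of "j * a"] xlnx_scaled[of a] by simp
  have ub: "ln (fact (j * b)) \<le> 1 + ln (real (j * b) + 1) + real j * real b * ln (real j) + real j * (real b * ln (real b)) - real j * real b"
    using ln_fact_upper[of "j * b"] xlnx_scaled[of b] by simp
  have pos1: "0 < trinom n a b" and pos2: "0 < trinom (n * j) (j * a) (j * b)" unfolding trinom_def by simp_all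
  have "ln (trinom n a b / trinom (n * j) (j * a) (j * b)) = ln (trinom n a b) - ln (trinom (n * j) (j * a) (j * b))"
    using pos1 pos2 by (simp add: ln_div)
  also have "\<dots> \<le> trinom_ratio_exponent n j a b"
    unfolding t1 t2 trinom_ratio_exponent_def using f1 f2 ua ub ln_fact_lower[of a] ln_fact_lower[of b] ln_m
    by (simp add: algebra_simps)
  finally have "ln (trinom n a b / trinom (n * j) (j * a) (j * b)) \<le> trinom_ratio_exponent n j a b" .
  then show ?thesis using pos1 pos2 by (metis divide_pos_pos exp_le_cancel_iff exp_ln)
qed

(* The exponent obtained from the saddle-point bound for E, with real parameters J = j, K = k,
   N = n, A = a, B = b and a saddle point (x, y). *)
definition saddle_exponent :: "real \<Rightarrow> real \<Rightarrow> real \<Rightarrow> real \<Rightarrow> real \<Rightarrow> real \<Rightarrow> real \<Rightarrow> real" where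
  "saddle_exponent J K N A B x y = (J - 1) * (A * ln A - A) + (J - 1) * (B * ln B - B) + (A + B) * ln N
     - J * (A + B) * ln (N - A - B) + (N * J / K) * g_excess K x y - J * A * ln x - J * B * ln y"

lemma E_le_saddle:
  assumes ab: "a + b < n" and j: "1 \<le> j" and k: "2 \<le> k" and kn: "k dvd n"
    and x: "0 \<le> x" and y: "0 < y" and ax: "a = 0 \<or> 0 < x"
  shows "E_val n j k a b \<le> exp (2 + ln (real (j * a) + 1) + ln (real (j * b) + 1)
            + saddle_exponent (real j) (real k) (real n) (real a) (real b) x y)"
proof -
  have m: "real (n * j div k) = real n * real j / real k"
    using kn k by (auto simp: of_nat_div)
  have "E_val n j k a b = (trinom n a b / trinom (n * j) (j * a) (j * b)) * S_coeff n j k a b"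
    unfolding E_val_def by simp
  also have "\<dots> \<le> exp (trinom_ratio_exponent n j a b)
      * exp (real (n * j div k) * g_excess (real k) x y - real (j * a) * ln x - real (j * b) * ln y)"
    by (rule mult_mono[OF trinom_ratio_bound[OF ab j] S_bound[OF k x y ax]])
       (auto simp: trinom_def intro: S_nonneg)
  also have "\<dots> = exp (2 + ln (real (j * a) + 1) + ln (real (j * b) + 1)
            + saddle_exponent (real j) (real k) (real n) (real a) (real b) x y)"
    unfolding exp_add[symmetric] trinom_ratio_exponent_def saddle_exponent_def m
    by (simp add: algebra_simps)
  finally show ?thesis .
qed

definition v_bracket :: "nat \<Rightarrow> real \<Rightarrow> real \<Rightarrow> real" where
  "v_bracket j c L = (c - 1) * real j * ln (1 - c) - 2 * c * ln c + (1 + c) * (2 - real j) * (1 - L)"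

lemma v_fun_eq_bracket: "v_fun j c d = d / 2 * v_bracket j c (ln d)"
  unfolding v_fun_def v_bracket_def by simp

lemma neg_xlnx_bounds:
  fixes u :: real assumes u: "0 < u" "u < 1"
  shows "0 \<le> - u * ln u \<and> - u * ln u \<le> 1"
proof -
  have "ln u < ln 1" using u by (subst ln_less_cancel_iff) auto
  then have "ln u < 0" by simp
  then have a: "0 \<le> - u * ln u" using u by (simp add: mult_nonneg_nonpos)
  have "ln (1/u) \<le> 1/u - 1" by (rule ln_le_minus_one) (use u in simp)
  then have "- ln u \<le> 1/u - 1" using u by (simp add: ln_div)
  then have "u * (- ln u) \<le> u * (1/u - 1)" using u by (intro mult_left_mono) auto
  also have "\<dots> = 1 - u" using u by (simp add: field_simps)
  finally show ?thesis using a u by simp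
qed

definition v_entropy :: "nat \<Rightarrow> real \<Rightarrow> real" where
  "v_entropy j c = (c - 1) * real j * ln (1 - c) - 2 * c * ln c"

lemma v_bracket_split: "v_bracket j c L = v_entropy j c + (1 + c) * (2 - real j) * (1 - L)"
  unfolding v_bracket_def v_entropy_def by simp

lemma v_entropy_bounds:
  assumes "0 < c" "c < 1"
  shows "0 \<le> v_entropy j c \<and> v_entropy j c \<le> real j + 2"
proof -
  have 1: "0 \<le> - (1-c) * ln (1-c) \<and> - (1-c) * ln (1-c) \<le> 1" by (rule neg_xlnx_bounds) (use assms in auto)
  have 2: "0 \<le> - c * ln c \<and> - c * ln c \<le> 1" by (rule neg_xlnx_bounds) (use assms in auto)
  have e: "v_entropy j c = real j * (- (1-c) * ln (1-c)) + 2 * (- c * ln c)"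
    unfolding v_entropy_def by (simp add: algebra_simps)
  have "real j * (- (1-c) * ln (1-c)) \<le> real j * 1" using 1 by (intro mult_left_mono) auto
  moreover have "0 \<le> real j * (- (1-c) * ln (1-c))" using 1 by simp
  ultimately show ?thesis using 2 unfolding e by linarith
qed

definition v_sup :: "nat \<Rightarrow> real \<Rightarrow> real" where
  "v_sup j L = (SUP c\<in>{0<..<1}. v_bracket j c L)"

lemma v_bracket_upper:
  assumes "3 \<le> j" "0 < c" "c < 1"
  shows "v_bracket j c L \<le> real j + 2 + 2 * (real j - 2) * \<bar>1 - L\<bar>"
proof -
  have "(1 + c) * (2 - real j) * (1 - L) \<le> \<bar>(1 + c) * (2 - real j) * (1 - L)\<bar>" by simp
  also have "\<dots> = (1 + c) * (real j - 2) * \<bar>1 - L\<bar>" using assms by (simp add: abs_mult)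
  also have "\<dots> \<le> 2 * (real j - 2) * \<bar>1 - L\<bar>" using assms by (intro mult_right_mono) auto
  finally show ?thesis using v_entropy_bounds[OF assms(2,3), of j] unfolding v_bracket_split by linarith
qed

lemma v_bracket_bdd:
  assumes j: "3 \<le> j" shows "bdd_above ((\<lambda>c. v_bracket j c L) ` {0<..<1})"
  by (rule bdd_aboveI2[where M = "real j + 2 + 2 * (real j - 2) * \<bar>1 - L\<bar>"])
     (use v_bracket_upper[OF j] in auto)

(* The bracket is affine in L with slope between (j-2) and 2 (j-2). *)
lemma v_bracket_diff: "v_bracket j c L1 - v_bracket j c L2 = (1 + c) * (real j - 2) * (L1 - L2)"
  unfolding v_bracket_def by (simp add: algebra_simps)

lemma v_sup_upper: "3 \<le> j \<Longrightarrow> 0 < c \<Longrightarrow> c < 1 \<Longrightarrow> v_bracket j c L \<le> v_sup j L"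
  unfolding v_sup_def by (rule cSUP_upper) (auto intro: v_bracket_bdd)

lemma v_sup_least: "(\<And>c. 0 < c \<Longrightarrow> c < 1 \<Longrightarrow> v_bracket j c L \<le> M) \<Longrightarrow> v_sup j L \<le> M"
  unfolding v_sup_def by (rule cSUP_least) auto

lemma v_sup_lipschitz:
  assumes j: "3 \<le> j"
  shows "v_sup j L1 \<le> v_sup j L2 + 2 * (real j - 2) * \<bar>L1 - L2\<bar>"
proof (rule v_sup_least)
  fix c :: real assume c: "0 < c" "c < 1"
  have "v_bracket j c L1 - v_bracket j c L2 \<le> \<bar>(1 + c) * (real j - 2) * (L1 - L2)\<bar>" unfolding v_bracket_diff by simp
  also have "\<dots> = (1 + c) * (real j - 2) * \<bar>L1 - L2\<bar>" using c j by (simp add: abs_mult)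
  also have "\<dots> \<le> 2 * (real j - 2) * \<bar>L1 - L2\<bar>" using c j by (intro mult_right_mono) auto
  finally show "v_bracket j c L1 \<le> v_sup j L2 + 2 * (real j - 2) * \<bar>L1 - L2\<bar>"
    using v_sup_upper[OF j c, of L2] by linarith
qed

lemma v_sup_strict_mono:
  assumes j: "3 \<le> j" and L: "L1 < L2"
  shows "v_sup j L1 < v_sup j L2"
proof -
  have "v_sup j L1 \<le> v_sup j L2 - (real j - 2) * (L2 - L1)"
  proof (rule v_sup_least)
    fix c :: real assume c: "0 < c" "c < 1"
    have "(real j - 2) * (L2 - L1) \<le> (1 + c) * (real j - 2) * (L2 - L1)"
      using c j L by (simp add: mult_right_mono)
    then have "v_bracket j c L1 + (real j - 2) * (L2 - L1) \<le> v_bracket j c L2" using v_bracket_diff[of j c L2 L1] by linarith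
    then show "v_bracket j c L1 \<le> v_sup j L2 - (real j - 2) * (L2 - L1)" using v_sup_upper[OF j c, of L2] by linarith
  qed
  moreover have "0 < (real j - 2) * (L2 - L1)" using j L by simp
  ultimately show ?thesis by linarith
qed

lemma v_sup_continuous:
  assumes j: "3 \<le> j" shows "continuous_on S (v_sup j)"
proof -
  have "(2 * (real j - 2))-lipschitz_on S (v_sup j)"
  proof (rule lipschitz_onI)
    fix x y assume "x \<in> S" "y \<in> S"
    have "v_sup j x - v_sup j y \<le> 2 * (real j - 2) * \<bar>x - y\<bar>" using v_sup_lipschitz[OF j, of x y] by linarith
    moreover have "v_sup j y - v_sup j x \<le> 2 * (real j - 2) * \<bar>x - y\<bar>" using v_sup_lipschitz[OF j, of y x] by (simp add: abs_minus_commute)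
    ultimately show "dist (v_sup j x) (v_sup j y) \<le> 2 * (real j - 2) * dist x y"
      by (simp add: dist_real_def abs_le_iff)
  next
    show "0 \<le> 2 * (real j - 2)" using j by simp
  qed
  then show ?thesis by (rule lipschitz_on_continuous_on)
qed

lemma SUP_v_fun:
  assumes j: "3 \<le> j" and d: "0 < d"
  shows "(SUP c\<in>{0<..<1}. v_fun j c d) = d / 2 * v_sup j (ln d)"
proof (rule antisym)
  show "(SUP c\<in>{0<..<1}. v_fun j c d) \<le> d / 2 * v_sup j (ln d)"
    by (rule cSUP_least) (auto simp: v_fun_eq_bracket d intro!: mult_left_mono v_sup_upper[OF j])
next
  have bdd: "bdd_above ((\<lambda>c. v_fun j c d) ` {0<..<1})"
    by (rule bdd_aboveI2[where M = "d / 2 * v_sup j (ln d)"]) (auto simp: v_fun_eq_bracket d intro!: mult_left_mono v_sup_upper[OF j])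
  have "v_sup j (ln d) \<le> 2 / d * (SUP c\<in>{0<..<1}. v_fun j c d)"
  proof (rule v_sup_least)
    fix c :: real assume c: "0 < c" "c < 1"
    have "v_fun j c d \<le> (SUP c\<in>{0<..<1}. v_fun j c d)" by (rule cSUP_upper) (use c bdd in auto)
    then show "v_bracket j c (ln d) \<le> 2 / d * (SUP c\<in>{0<..<1}. v_fun j c d)"
      using d by (simp add: v_fun_eq_bracket field_simps)
  qed
  then show "d / 2 * v_sup j (ln d) \<le> (SUP c\<in>{0<..<1}. v_fun j c d)"
    using d by (simp add: field_simps)
qed

(* beta_bar j is well defined: v_sup j is continuous, strictly increasing, negative far to the
   left and nonnegative at L = 1. *)
lemma beta_exists_unique:
  assumes j: "3 \<le> j"
  shows "\<exists>!d. d > 0 \<and> (SUP c\<in>{0<..<1}. v_fun j c d) = 0"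
proof -
  define L0 where "L0 = 1 - (real j + 2) / (real j - 2)"
  have jr: "real j - 2 > 0" using j by simp
  have g0: "v_sup j L0 \<le> 0"
  proof (rule v_sup_least)
    fix c :: real assume c: "0 < c" "c < 1"
    have "(1 + c) * (2 - real j) * (1 - L0) = - (1 + c) * (real j + 2)"
      unfolding L0_def using jr by (simp add: field_simps)
    also have "\<dots> \<le> - (real j + 2)" using c by (simp add: algebra_simps)
    finally show "v_bracket j c L0 \<le> 0" using v_entropy_bounds[OF c, of j] unfolding v_bracket_split by linarith
  qed
  have g1: "0 \<le> v_sup j 1"
    using v_sup_upper[OF j, of "1/2" 1] v_entropy_bounds[of "1/2" j] by (simp add: v_bracket_split)
  have "L0 \<le> 1" unfolding L0_def using jr by simp
  then obtain L where L: "v_sup j L = 0"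
    using IVT'[of "v_sup j" L0 0 1] g0 g1 v_sup_continuous[OF j] by blast
  show ?thesis
  proof (rule ex_ex1I)
    show "\<exists>d. d > 0 \<and> (SUP c\<in>{0<..<1}. v_fun j c d) = 0"
      by (rule exI[of _ "exp L"]) (simp add: SUP_v_fun[OF j] L)
  next
    fix d1 d2 assume 1: "d1 > 0 \<and> (SUP c\<in>{0<..<1}. v_fun j c d1) = 0"
      and 2: "d2 > 0 \<and> (SUP c\<in>{0<..<1}. v_fun j c d2) = 0"
    have "d1 / 2 * v_sup j (ln d1) = 0" using 1 SUP_v_fun[OF j, of d1] by linarith
    then have z1: "v_sup j (ln d1) = 0" using 1 by simp
    have "d2 / 2 * v_sup j (ln d2) = 0" using 2 SUP_v_fun[OF j, of d2] by linarith
    then have z2: "v_sup j (ln d2) = 0" using 2 by simp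
    have "ln d1 = ln d2"
      using v_sup_strict_mono[OF j, of "ln d1" "ln d2"] v_sup_strict_mono[OF j, of "ln d2" "ln d1"] z1 z2
      by (cases "ln d1" "ln d2" rule: linorder_cases) auto
    then show "d1 = d2" using 1 2 by simp
  qed
qed

lemma beta_bar_props:
  assumes j: "3 \<le> j"
  shows "0 < beta_bar j" "ln (beta_bar j) \<le> 1" "\<And>c. 0 \<le> c \<Longrightarrow> c < 1 \<Longrightarrow> v_bracket j c (ln (beta_bar j)) \<le> 0"
proof -
  have P: "beta_bar j > 0 \<and> (SUP c\<in>{0<..<1}. v_fun j c (beta_bar j)) = 0"
    unfolding beta_bar_def by (rule theI'[OF beta_exists_unique[OF j]])
  then show b0: "0 < beta_bar j" by simp
  have "beta_bar j / 2 * v_sup j (ln (beta_bar j)) = 0" using P SUP_v_fun[OF j b0] by linarith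
  then have G0: "v_sup j (ln (beta_bar j)) = 0" using b0 by simp
  have F0: "v_bracket j c (ln (beta_bar j)) \<le> 0" if "0 < c" "c < 1" for c
    using v_sup_upper[OF j that, of "ln (beta_bar j)"] G0 by simp
  have jr: "real j - 2 > 0" using j by simp
  show l1: "ln (beta_bar j) \<le> 1"
  proof (rule ccontr)
    assume "\<not> ln (beta_bar j) \<le> 1"
    then have "0 < (1 + 1/2) * (real j - 2) * (ln (beta_bar j) - 1)" using jr by simp
    moreover have "v_bracket j (1/2) (ln (beta_bar j)) = v_entropy j (1/2) + (1 + 1/2) * (real j - 2) * (ln (beta_bar j) - 1)"
      unfolding v_bracket_split by (simp add: algebra_simps)
    ultimately show False using F0[of "1/2"] v_entropy_bounds[of "1/2" j] by simp
  qed
  fix c :: real assume c: "0 \<le> c" "c < 1"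
  show "v_bracket j c (ln (beta_bar j)) \<le> 0"
  proof (cases "c = 0")
    case True
    then show ?thesis using l1 jr by (simp add: v_bracket_def mult_nonpos_nonneg)
  next
    case False then show ?thesis using F0 c by simp
  qed
qed

lemma exp_minus_one_le: "0 \<le> t \<Longrightarrow> exp t - 1 \<le> t * exp (t::real)"
proof -
  assume t: "0 \<le> t"
  have "1 - t \<le> exp (- t)" using exp_ge_add_one_self[of "-t"] by simp
  then have "(1 - t) * exp t \<le> exp (-t) * exp t" by (intro mult_right_mono) auto
  then show ?thesis by (simp add: exp_minus field_simps)
qed

lemma ln_diff_lower:
  fixes N A B :: real
  assumes N: "0 < N" and t: "0 \<le> A + B" "(A + B) / N \<le> 1/2"
  shows "ln N - 2 * ((A + B) / N) \<le> ln (N - A - B)"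
proof -
  define s where "s = (A + B) / N"
  have s: "0 \<le> s" "s \<le> 1/2" using t N unfolding s_def by auto
  have "- s - 2 * s^2 \<le> ln (1 - s)" by (rule ln_one_minus_pos_lower_bound) (use s in auto)
  moreover have "s * (2 * s) \<le> s * 1" using s by (intro mult_left_mono) auto
  then have "s^2 \<le> s / 2" by (simp add: power2_eq_square)
  ultimately have l: "- 2 * s \<le> ln (1 - s)" by linarith
  have "N - A - B = N * (1 - s)" unfolding s_def using N by (simp add: field_simps)
  moreover have "0 < 1 - s" using s by simp
  ultimately have "ln (N - A - B) = ln N + ln (1 - s)" using N by (simp add: ln_mult)
  then have "ln N - 2 * s \<le> ln (N - A - B)" using l by linarith
  then show ?thesis unfolding s_def .
qed

lemma g_excess_le_quadratic:
  fixes K x y :: real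
  assumes K: "2 \<le> K" and x: "0 \<le> x" and y: "0 \<le> y"
  shows "g_excess K x y \<le> K\<^sup>2 * (x * y + y\<^sup>2 / 2) * exp (K * (x + y))"
proof -
  define E where "E = exp (K * (x + y))"
  have "exp ((K - 1) * x) - 1 \<le> (K - 1) * x * exp ((K - 1) * x)"
    by (rule exp_minus_one_le) (use K x in simp)
  also have "\<dots> \<le> K * x * E"
    unfolding E_def using K x y by (intro mult_mono) (auto simp: algebra_simps mult_right_mono)
  finally have "K * y * (exp ((K - 1) * x) - 1) \<le> K * y * (K * x * E)"
    using K y by (intro mult_left_mono) auto
  then have linear: "K * y * (exp ((K - 1) * x) - 1) \<le> K\<^sup>2 * (x * y) * E"
    by (simp add: power2_eq_square algebra_simps)
  have "exp ((K - 2) * (x + y)) \<le> E" unfolding E_def using x y K by (simp add: mult_right_mono)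
  moreover have "K * (K - 1) / 2 \<le> K\<^sup>2 / 2" using K by (simp add: power2_eq_square algebra_simps)
  ultimately have quadratic: "(K * (K - 1) / 2) * y\<^sup>2 * exp ((K - 2) * (x + y)) \<le> K\<^sup>2 / 2 * y\<^sup>2 * E"
    using K by (intro mult_mono) (auto simp: zero_le_mult_iff)
  have "K\<^sup>2 * (x * y + y\<^sup>2 / 2) * E = K\<^sup>2 * (x * y) * E + K\<^sup>2 / 2 * y\<^sup>2 * E"
    by (simp add: algebra_simps)
  then show ?thesis using linear quadratic unfolding g_excess_def E_def[symmetric] by linarith
qed

lemma saddle_exponent_split:
  fixes J K N B p x y :: real
  assumes J: "0 \<le> J" and N: "0 < N" and B: "0 < B" and p: "0 \<le> p"
    and small: "(p + 1) * B / N \<le> 1/2"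
  shows "saddle_exponent J K N (p * B) B x y
    \<le> B * ((J - 1) * (p + 1) * (ln B - ln N) + (J - 1) * p * ln p - (J - 1) * (p + 1)
           + 2 * J * (p + 1)\<^sup>2 * B / N)
       + (N * J / K) * g_excess K x y - J * (p * B) * ln x - J * B * ln y"
proof -
  have "ln N - 2 * ((p * B + B) / N) \<le> ln (N - p * B - B)"
    by (rule ln_diff_lower[OF N]) (use p B small in \<open>auto simp: algebra_simps\<close>)
  then have log_gap: "J * (p * B + B) * (ln N - 2 * ((p * B + B) / N)) \<le> J * (p * B + B) * ln (N - p * B - B)"
    using J p B by (intro mult_left_mono) auto
  have ln_pB: "p * B * ln (p * B) = p * B * (ln p + ln B)"
    by (cases "p = 0") (use p B in \<open>auto simp: ln_mult\<close>)
  have "(J - 1) * (p * B * ln (p * B) - p * B) + (J - 1) * (B * ln B - B) + (p * B + B) * ln N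
      - J * (p * B + B) * (ln N - 2 * ((p * B + B) / N))
      = B * ((J - 1) * (p + 1) * (ln B - ln N) + (J - 1) * p * ln p - (J - 1) * (p + 1)
           + 2 * J * (p + 1)\<^sup>2 * B / N)"
    unfolding ln_pB using N by (simp add: field_simps power2_eq_square)
  then show ?thesis unfolding saddle_exponent_def using log_gap by linarith
qed

lemma saddle_exponent_small_ratio:
  fixes J K N B p \<zeta> :: real
  assumes J: "3 \<le> J" and K: "2 \<le> K" and N: "0 < N" and B: "0 < B" and p: "0 \<le> p"
    and \<zeta>: "0 < \<zeta>" and small: "(p + 1) * B / N \<le> 1/2"
    and x: "x = sqrt (B / (K * N)) * (p / sqrt \<zeta>)" and y: "y = sqrt (B / (K * N)) * sqrt \<zeta>"
  shows "saddle_exponent J K N (p * B) B x y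
    \<le> B * ((p + 1) * (((J - 2) / 2) * (ln B - ln N) + (J / 2) * ln K) - p * ln p - (J - 1) * (p + 1)
           + (J / 2) * (p - 1) * ln \<zeta>
           + J * (p + \<zeta> / 2) * exp (sqrt (K * B / N) * (p / sqrt \<zeta> + sqrt \<zeta>))
           + 2 * J * (p + 1)\<^sup>2 * B / N)"
proof -
  define \<sigma> Z \<tau> where "\<sigma> = sqrt (B / (K * N))" and "Z = sqrt \<zeta>" and "\<tau> = sqrt (K * B / N)"
  have Z: "0 < Z" "Z\<^sup>2 = \<zeta>" unfolding Z_def using \<zeta> by simp_all
  have \<sigma>: "0 < \<sigma>" "\<sigma>\<^sup>2 = B / (K * N)" unfolding \<sigma>_def using B N K by simp_all
  have "\<tau> = sqrt ((K * \<sigma>)\<^sup>2)"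
    unfolding \<tau>_def using \<sigma>(2) K N by (simp add: power_mult_distrib field_simps power2_eq_square)
  then have K\<sigma>: "K * \<sigma> = \<tau>" using \<sigma> K by simp
  have x0: "0 \<le> x" and y0: "0 \<le> y" unfolding x y \<sigma>_def[symmetric] Z_def[symmetric] using \<sigma> Z p by simp_all
  have xy: "x * y = \<sigma>\<^sup>2 * p" and yy: "y\<^sup>2 = \<sigma>\<^sup>2 * \<zeta>"
    unfolding x y \<sigma>_def[symmetric] Z_def[symmetric] using Z by (simp_all add: power2_eq_square field_simps)
  have Kxy: "K * (x + y) = \<tau> * (p / Z + Z)"
    unfolding x y \<sigma>_def[symmetric] Z_def[symmetric] K\<sigma>[symmetric] by (simp add: algebra_simps)
  have "(N * J / K) * g_excess K x y \<le> (N * J / K) * (K\<^sup>2 * (x * y + y\<^sup>2 / 2) * exp (K * (x + y)))"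
    using g_excess_le_quadratic[OF K x0 y0] N J K by (intro mult_left_mono) auto
  also have "\<dots> = J * B * (p + \<zeta> / 2) * exp (\<tau> * (p / Z + Z))"
    unfolding Kxy xy yy \<sigma>(2) using N K by (simp add: field_simps power2_eq_square)
  finally have excess: "(N * J / K) * g_excess K x y \<le> J * B * (p + \<zeta> / 2) * exp (\<tau> * (p / Z + Z))" .
  have ln_\<sigma>: "ln \<sigma> = (ln B - ln K - ln N) / 2"
    unfolding \<sigma>_def using B N K by (simp add: ln_sqrt ln_div ln_mult)
  have ln_Z: "ln Z = ln \<zeta> / 2" unfolding Z_def using \<zeta> by (simp add: ln_sqrt)
  have ln_x: "J * (p * B) * ln x = J * (p * B) * ((ln B - ln K - ln N) / 2 + ln p - ln \<zeta> / 2)"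
  proof (cases "p = 0")
    case False
    then have "ln x = ln \<sigma> + ln p - ln Z"
      unfolding x \<sigma>_def[symmetric] Z_def[symmetric] using p \<sigma> Z by (simp add: ln_mult ln_div)
    then show ?thesis using ln_\<sigma> ln_Z by simp
  qed simp
  have "ln y = ln \<sigma> + ln Z" unfolding y \<sigma>_def[symmetric] Z_def[symmetric] using \<sigma> Z by (simp add: ln_mult)
  then have ln_y: "J * B * ln y = J * B * ((ln B - ln K - ln N) / 2 + ln \<zeta> / 2)"
    using ln_\<sigma> ln_Z by simp
  have "saddle_exponent J K N (p * B) B x y
    \<le> B * ((J - 1) * (p + 1) * (ln B - ln N) + (J - 1) * p * ln p - (J - 1) * (p + 1)
           + 2 * J * (p + 1)\<^sup>2 * B / N)
       + J * B * (p + \<zeta> / 2) * exp (\<tau> * (p / Z + Z))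
       - J * (p * B) * ((ln B - ln K - ln N) / 2 + ln p - ln \<zeta> / 2)
       - J * B * ((ln B - ln K - ln N) / 2 + ln \<zeta> / 2)"
    using saddle_exponent_split[of J N B p K x y] J N B p small excess unfolding ln_x ln_y by linarith
  also have "\<dots> = B * ((p + 1) * (((J - 2) / 2) * (ln B - ln N) + (J / 2) * ln K) - p * ln p
           - (J - 1) * (p + 1) + (J / 2) * (p - 1) * ln \<zeta> + J * (p + \<zeta> / 2) * exp (\<tau> * (p / Z + Z))
           + 2 * J * (p + 1)\<^sup>2 * B / N)"
    by (simp add: field_simps)
  finally show ?thesis unfolding \<tau>_def Z_def .
qed

(* For bounded p, the main term of the small-ratio exponent is controlled by the defining
   property of beta_bar (the bracket of v is nonpositive at L = ln beta_bar). *)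
lemma small_ratio_main_term:
  fixes J p \<eta> Lb D :: real and j :: nat
  assumes J: "J = real j" "3 \<le> j" and p: "0 \<le> p" and eta: "0 < \<eta>" "ln \<eta> \<le> -1"
    and Lb: "Lb \<le> 1" and bracket: "\<And>c. 0 \<le> c \<Longrightarrow> c < 1 \<Longrightarrow> v_bracket j c Lb \<le> 0" and D: "D \<le> 0"
    and \<zeta>: "\<zeta> = max (1 - p) \<eta>"
  shows "(p + 1) * ((J - 2) / 2) * (D + Lb) - p * ln p - (J - 1) * (p + 1) + (J / 2) * (p - 1) * ln \<zeta>
          + J * (p + \<zeta> / 2) \<le> ((J - 2) / 2) * D + J * \<eta> / 2"
proof -
  have J3: "3 \<le> J" using J by simp
  have D_part: "(p + 1) * ((J - 2) / 2) * D \<le> ((J - 2) / 2) * D"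
  proof -
    have "p * (((J - 2) / 2) * D) \<le> 0" using p J3 D by (intro mult_nonneg_nonpos) auto
    moreover have "(p + 1) * ((J - 2) / 2) * D = ((J - 2) / 2) * D + p * (((J - 2) / 2) * D)"
      by (simp add: field_simps)
    ultimately show ?thesis by linarith
  qed
  show ?thesis
  proof (cases "p < 1")
    case True
    have bracket_p: "v_bracket j p Lb \<le> 0" using bracket[OF p True] .
    have \<zeta>_range: "1 - p \<le> \<zeta>" "\<zeta> - (1 - p) \<le> \<eta>" using \<zeta> eta True by auto
    have ln_mono: "ln (1 - p) \<le> ln \<zeta>" using \<zeta>_range True by simp
    have ln_\<zeta>: "(J / 2) * (p - 1) * ln \<zeta> \<le> (J / 2) * (p - 1) * ln (1 - p)"
    proof -
      have "(J / 2) * (1 - p) * ln (1 - p) \<le> (J / 2) * (1 - p) * ln \<zeta>"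
        using ln_mono True J3 by (intro mult_left_mono) auto
      moreover have "\<And>w. (J / 2) * (p - 1) * w = - ((J / 2) * (1 - p) * w)" by (simp add: field_simps)
      ultimately show ?thesis by (metis neg_le_iff_le)
    qed
    have bracket_at_p: "v_bracket j p Lb = (p - 1) * J * ln (1 - p) - 2 * p * ln p + (1 + p) * (2 - J) * (1 - Lb)"
      unfolding v_bracket_def J by simp
    have "(p + 1) * ((J - 2) / 2) * (D + Lb) - p * ln p - (J - 1) * (p + 1) + (J / 2) * (p - 1) * ln (1 - p)
          + J * (p + \<zeta> / 2) = v_bracket j p Lb / 2 + (p + 1) * ((J - 2) / 2) * D + (J / 2) * (\<zeta> - (1 - p))"
      unfolding bracket_at_p by (simp add: field_simps)
    moreover have "(J / 2) * (\<zeta> - (1 - p)) \<le> J * \<eta> / 2" using \<zeta>_range J3 by simp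
    ultimately show ?thesis using bracket_p D_part ln_\<zeta> by linarith
  next
    case False
    then have \<zeta>_eq: "\<zeta> = \<eta>" using \<zeta> eta by auto
    have Lb_part: "(p + 1) * ((J - 2) / 2) * Lb \<le> (p + 1) * ((J - 2) / 2)"
      using Lb p J3 by (intro mult_left_mono[of Lb 1, simplified]) auto
    have ln_\<eta>_part: "(J / 2) * (p - 1) * ln \<eta> \<le> - (J / 2) * (p - 1)"
    proof -
      have "(J / 2) * (p - 1) * ln \<eta> \<le> (J / 2) * (p - 1) * (-1)"
        using eta False J3 by (intro mult_left_mono) auto
      then show ?thesis by simp
    qed
    have entropy: "0 \<le> p * ln p" using False by simp
    have "(p + 1) * ((J - 2) / 2) * (D + Lb) - p * ln p - (J - 1) * (p + 1) + (J / 2) * (p - 1) * ln \<zeta>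
          + J * (p + \<zeta> / 2)
        = (p + 1) * ((J - 2) / 2) * D + (p + 1) * ((J - 2) / 2) * Lb - p * ln p - (J - 1) * (p + 1)
          + (J / 2) * (p - 1) * ln \<eta> + J * p + J * \<eta> / 2"
      unfolding \<zeta>_eq by (simp add: field_simps)
    moreover have "(p + 1) * ((J - 2) / 2) - (J - 1) * (p + 1) + J * p - (J / 2) * (p - 1) = 0"
      by (simp add: field_simps)
    ultimately show ?thesis using D_part Lb_part ln_\<eta>_part entropy by linarith
  qed
qed


lemma saddle_exponent_large_ratio:
  fixes J K N B p x y :: real
  assumes J: "3 \<le> J" and K: "2 \<le> K" and N: "0 < N" and B: "0 < B" and p: "1 \<le> p"
    and pK: "p \<le> K - 1" and small: "K * B / N \<le> 1/2"
    and x: "x = p / (K - 1)" and y: "y = exp (- p) * B / N"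
  shows "saddle_exponent J K N (p * B) B x y \<le> B * (((J - 1) * p - 1) * (ln B - ln N) - p * ln p + p + J + 1
            + J * p * ln (K - 1) + 2 * J * (p + 1)\<^sup>2 * B / N)"
proof -
  have x0: "0 < x" and y0: "0 < y" using x y p K B N by simp_all
  have Kx: "(K - 1) * x = p" using x K by simp
  have KB1: "K * B / N \<le> 1" using small by linarith
  have "K * y = exp (- p) * (K * B / N)" unfolding y by simp
  also have "\<dots> \<le> 1 * 1" using KB1 K B N p by (intro mult_mono) auto
  finally have Ky: "K * y \<le> 1" by simp
  have excess_bound: "g_excess K x y \<le> K * y * exp p + K\<^sup>2 / 2 * y\<^sup>2 * exp (p + 1)"
  proof -
    have linear: "K * y * (exp ((K - 1) * x) - 1) \<le> K * y * exp p" unfolding Kx using K y0 by simp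
    have "(K - 2) * (x + y) \<le> (K - 1) * x + K * y" using K x0 y0 by (simp add: algebra_simps)
    also have "\<dots> \<le> p + 1" using Kx Ky by simp
    finally have "exp ((K - 2) * (x + y)) \<le> exp (p + 1)" by simp
    moreover have "K * (K - 1) / 2 \<le> K\<^sup>2 / 2" using K by (simp add: power2_eq_square algebra_simps)
    ultimately have quadratic: "(K * (K - 1) / 2) * y\<^sup>2 * exp ((K - 2) * (x + y)) \<le> K\<^sup>2 / 2 * y\<^sup>2 * exp (p + 1)"
      using K by (intro mult_mono) (auto simp: zero_le_mult_iff)
    show ?thesis unfolding g_excess_def using linear quadratic by linarith
  qed
  have "(N * J / K) * g_excess K x y \<le> (N * J / K) * (K * y * exp p + K\<^sup>2 / 2 * y\<^sup>2 * exp (p + 1))"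
    using excess_bound N J K by (intro mult_left_mono) auto
  also have "\<dots> = J * B + J * B * (K * B / N) * exp (1 - p) / 2"
  proof -
    have "exp (- p) * exp p = 1" "exp (- p) * exp (- p) * exp (p + 1) = exp (1 - p)"
      by (simp_all add: exp_add[symmetric])
    then show ?thesis unfolding y using N K by (simp add: field_simps power2_eq_square)
  qed
  also have "\<dots> \<le> J * B + J * B * 1 * 1 / 2"
    using J B KB1 K N p by (intro add_left_mono divide_right_mono mult_mono) auto
  also have "\<dots> \<le> 2 * J * B" using J B by simp
  finally have excess: "(N * J / K) * g_excess K x y \<le> 2 * J * B" .
  have "(p + 1) * B \<le> K * B" using pK B by (intro mult_right_mono) auto
  then have small': "(p + 1) * B / N \<le> 1/2"
    using N small by (meson divide_right_mono less_imp_le order.trans)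
  have ln_x: "J * (p * B) * ln x = J * (p * B) * (ln p - ln (K - 1))"
    unfolding x using p K by (simp add: ln_div)
  have ln_y: "J * B * ln y = J * B * (- p + ln B - ln N)"
    unfolding y using B N by (simp add: ln_div ln_mult)
  have "saddle_exponent J K N (p * B) B x y
    \<le> B * ((J - 1) * (p + 1) * (ln B - ln N) + (J - 1) * p * ln p - (J - 1) * (p + 1)
           + 2 * J * (p + 1)\<^sup>2 * B / N)
       + 2 * J * B - J * (p * B) * (ln p - ln (K - 1)) - J * B * (- p + ln B - ln N)"
    using saddle_exponent_split[of J N B p K x y] J N B p small' excess unfolding ln_x ln_y by linarith
  also have "\<dots> = B * (((J - 1) * p - 1) * (ln B - ln N) - p * ln p + p + J + 1
            + J * p * ln (K - 1) + 2 * J * (p + 1)\<^sup>2 * B / N)"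
    by (simp add: field_simps)
  finally show ?thesis .
qed

(* For large p the exponent is dominated by the factor (B / N)^((J-1) p - 1). *)
lemma large_ratio_main_term:
  fixes J K N B p Lb D :: real
  assumes J: "3 \<le> J" and K: "2 \<le> K" and p: "J + 2 \<le> p" and K_log: "2 * (J + 2) \<le> ln K"
    and Lb: "Lb \<le> 1" and D0: "D \<le> 0" and D: "D = ln B - ln N + (J / (J - 2)) * ln K - Lb"
    and error: "2 * J * (p + 1)^2 * B / N \<le> p"
  shows "((J - 1) * p - 1) * (ln B - ln N) - p * ln p + p + J + 1
            + J * p * ln (K - 1) + 2 * J * (p + 1)^2 * B / N \<le> D - 1"
proof -
  define r q where "r = J / (J - 2)" and "q = (J - 1) * p - 1"
  have r: "1 \<le> r" unfolding r_def using J by simp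
  have "2 * 5 \<le> (J - 1) * p" using J p by (intro mult_mono) auto
  then have q: "1 \<le> q" unfolding q_def by simp
  have ln_K: "0 \<le> ln K" using K by simp
  have log_ratio: "ln B - ln N = D + Lb - r * ln K" using D unfolding r_def by simp
  have "q * (ln B - ln N) = q * D + q * Lb - q * r * ln K"
    unfolding log_ratio by (simp add: algebra_simps)
  moreover have "q * D \<le> D" using mult_right_mono_neg[OF q D0] by simp
  moreover have "q * Lb \<le> q" using mult_left_mono[OF Lb] q by simp
  moreover have "J * p * ln (K - 1) \<le> J * p * ln K" using J p K by (intro mult_left_mono) auto
  moreover have "- (q * r * ln K) + J * p * ln K = r * (1 - p) * ln K"
    unfolding q_def r_def using J by (simp add: field_simps)
  moreover have "r * (1 - p) * ln K \<le> - ((p / 2) * ln K)"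
  proof -
    have "r * (1 - p) \<le> 1 * (1 - p)" using r p J by (intro mult_right_mono_neg) auto
    also have "\<dots> \<le> - (p / 2)" using p J by simp
    finally have "r * (1 - p) * ln K \<le> - (p / 2) * ln K" using ln_K by (intro mult_right_mono) auto
    then show ?thesis by simp
  qed
  moreover have "(p / 2) * (2 * (J + 2)) \<le> (p / 2) * ln K" using K_log p J by (intro mult_left_mono) auto
  moreover have "(p / 2) * (2 * (J + 2)) = J * p + 2 * p" by (simp add: algebra_simps)
  moreover have "q = J * p - p - 1" unfolding q_def by (simp add: algebra_simps)
  moreover have "0 \<le> p * ln p" using p J by simp
  ultimately show ?thesis using error p J unfolding q_def[symmetric] by linarith
qed

(* The slack in the exponent coming from theta < 1, and the cutoffs chosen from it. *)
definition gap :: "real \<Rightarrow> real" where "gap \<theta> = - ln \<theta> / 2"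

definition eta_floor :: "nat \<Rightarrow> real \<Rightarrow> real" where
  "eta_floor j \<theta> = min (exp (-1)) ((real j - 2) * gap \<theta> / (4 * real j))"

definition sz_bound :: "nat \<Rightarrow> real \<Rightarrow> real" where
  "sz_bound j \<theta> = (real j + 2) / sqrt (eta_floor j \<theta>) + 1"

definition tau_cap :: "nat \<Rightarrow> real \<Rightarrow> real" where
  "tau_cap j \<theta> = min (1 / (4 * real j)) (min (1 / sz_bound j \<theta>)
      (((real j - 2) * gap \<theta> / 8)
       / (3 * real j * (real j + 3) * sz_bound j \<theta> + 2 * real j * (real j + 3)\<^sup>2)))"

(* The conditions on k under which the estimates below apply; they hold for all large k. *)
definition large_k :: "nat \<Rightarrow> real \<Rightarrow> nat \<Rightarrow> bool" where
  "large_k j \<theta> k \<longleftrightarrow> real j + 3 \<le> real k \<and> 2 * (real j + 2) \<le> ln (real k)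
     \<and> (real j / (real j - 2)) * (ln (real k) - ln (real k - 1)) \<le> gap \<theta>
     \<and> real k * (\<theta> * beta_bar j * (real k - 1) powr (- real j / (real j - 2))) \<le> (tau_cap j \<theta>)\<^sup>2"

lemma cutoff_constants:
  assumes j: "3 \<le> j" and th: "0 < \<theta>" "\<theta> < 1"
  shows "0 < gap \<theta>" "0 < eta_floor j \<theta>" "eta_floor j \<theta> \<le> exp (-1)"
    "real j * eta_floor j \<theta> / 2 \<le> (real j - 2) * gap \<theta> / 8"
    "1 \<le> sz_bound j \<theta>" "0 < tau_cap j \<theta>" "tau_cap j \<theta> \<le> 1 / (4 * real j)"
    "tau_cap j \<theta> * sz_bound j \<theta> \<le> 1"
    "(3 * real j * (real j + 3) * sz_bound j \<theta> + 2 * real j * (real j + 3)\<^sup>2) * tau_cap j \<theta>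
       \<le> (real j - 2) * gap \<theta> / 8"
    "tau_cap j \<theta> \<le> 1 / 12"
proof -
  show gap: "0 < gap \<theta>" unfolding gap_def using th by simp
  have j3: "3 \<le> real j" using j by simp
  show eta: "0 < eta_floor j \<theta>" unfolding eta_floor_def using gap j3 by simp
  show "eta_floor j \<theta> \<le> exp (-1)" unfolding eta_floor_def by simp
  have "real j * eta_floor j \<theta> \<le> real j * ((real j - 2) * gap \<theta> / (4 * real j))"
    unfolding eta_floor_def using j3 by (intro mult_left_mono) auto
  also have "\<dots> = (real j - 2) * gap \<theta> / 4" using j3 by (simp add: field_simps)
  finally show "real j * eta_floor j \<theta> / 2 \<le> (real j - 2) * gap \<theta> / 8" by linarith
  show sz: "1 \<le> sz_bound j \<theta>" unfolding sz_bound_def using eta by simp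
  have den: "0 < 3 * real j * (real j + 3) * sz_bound j \<theta> + 2 * real j * (real j + 3)\<^sup>2"
    using sz j3 by (intro add_pos_pos) auto
  show "0 < tau_cap j \<theta>" unfolding tau_cap_def using j3 sz den gap by (auto intro!: divide_pos_pos)
  show cap: "tau_cap j \<theta> \<le> 1 / (4 * real j)" unfolding tau_cap_def by simp
  also have "1 / (4 * real j) \<le> 1 / 12" using j3 by (simp add: field_simps)
  finally show "tau_cap j \<theta> \<le> 1 / 12" .
  have "tau_cap j \<theta> \<le> 1 / sz_bound j \<theta>" unfolding tau_cap_def by simp
  then show "tau_cap j \<theta> * sz_bound j \<theta> \<le> 1" using sz by (simp add: field_simps)
  have "tau_cap j \<theta> \<le> ((real j - 2) * gap \<theta> / 8)
      / (3 * real j * (real j + 3) * sz_bound j \<theta> + 2 * real j * (real j + 3)\<^sup>2)"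
    unfolding tau_cap_def by simp
  then show "(3 * real j * (real j + 3) * sz_bound j \<theta> + 2 * real j * (real j + 3)\<^sup>2) * tau_cap j \<theta>
      \<le> (real j - 2) * gap \<theta> / 8"
    using den by (simp add: field_simps)
qed

lemma eventually_le_of_tendsto_zero:
  fixes f :: "'a \<Rightarrow> real"
  assumes "(f \<longlongrightarrow> 0) F" and "0 < c"
  shows "eventually (\<lambda>x. f x \<le> c) F"
  using order_tendstoD(2)[OF assms] by (auto elim: eventually_mono)

(* All conditions of large_k hold for large k; the last one because j/(j-2) > 1. *)
lemma large_k_eventually:
  assumes j: "3 \<le> j" and th: "0 < \<theta>" "\<theta> < 1"
  shows "\<exists>K. \<forall>k\<ge>K. large_k j \<theta> k"
proof -
  have "filterlim (\<lambda>k::nat. real k) at_top sequentially" by real_asymp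
  then have size: "eventually (\<lambda>k. real j + 3 \<le> real k) sequentially"
    by (simp add: filterlim_at_top)
  have "filterlim (\<lambda>k::nat. ln (real k)) at_top sequentially" by real_asymp
  then have log_size: "eventually (\<lambda>k. 2 * (real j + 2) \<le> ln (real k)) sequentially"
    by (simp add: filterlim_at_top)
  have "((\<lambda>k::nat. (real j / (real j - 2)) * (ln (real k) - ln (real k - 1))) \<longlongrightarrow> 0) sequentially"
    by real_asymp
  then have log_shift: "eventually (\<lambda>k. (real j / (real j - 2)) * (ln (real k) - ln (real k - 1)) \<le> gap \<theta>) sequentially"
    using cutoff_constants(1)[OF j th] by (rule eventually_le_of_tendsto_zero)
  have "- real j / (real j - 2) < -1" using j by (simp add: field_simps)
  then have "((\<lambda>k::nat. real k * (\<theta> * beta_bar j * (real k - 1) powr (- real j / (real j - 2)))) \<longlongrightarrow> 0) sequentially"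
    by real_asymp
  then have density: "eventually (\<lambda>k. real k * (\<theta> * beta_bar j * (real k - 1) powr (- real j / (real j - 2)))
      \<le> (tau_cap j \<theta>)\<^sup>2) sequentially"
    using cutoff_constants(6)[OF j th] by (intro eventually_le_of_tendsto_zero) simp_all
  have "eventually (large_k j \<theta>) sequentially"
    using eventually_conj[OF size eventually_conj[OF log_size eventually_conj[OF log_shift density]]]
    unfolding large_k_def by simp
  then show ?thesis by (simp add: eventually_sequentially)
qed

lemma exp_minus_one_le_three: "0 \<le> t \<Longrightarrow> t \<le> 1 \<Longrightarrow> exp t - 1 \<le> 3 * (t::real)"
proof -
  assume t: "0 \<le> t" "t \<le> 1"
  have "exp t \<le> 3" using t exp_le order.trans[of "exp t" "exp 1" 3] by simp
  then have "t * exp t \<le> t * 3" using t by (intro mult_left_mono) auto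
  then show ?thesis using exp_minus_one_le[OF t(1)] by simp
qed

lemma small_ratio_perturbation:
  fixes J p \<zeta> \<tau> B N :: real
  assumes j: "3 \<le> j" and J: "J = real j" and th: "0 < \<theta>" "\<theta> < 1"
    and p: "0 \<le> p" "p \<le> J + 2" and \<zeta>: "eta_floor j \<theta> \<le> \<zeta>" "\<zeta> \<le> 1"
    and \<tau>: "0 \<le> \<tau>" "\<tau> \<le> tau_cap j \<theta>" and BN: "0 \<le> B / N" "B / N \<le> \<tau>\<^sup>2"
  shows "J * (p + \<zeta> / 2) * (exp (\<tau> * (p / sqrt \<zeta> + sqrt \<zeta>)) - 1) + 2 * J * (p + 1)\<^sup>2 * B / N
         \<le> (J - 2) * gap \<theta> / 8"
proof -
  note cst = cutoff_constants[OF j th]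
  define Z where "Z = sqrt \<zeta>"
  define C where "C = sz_bound j \<theta>"
  have J3: "3 \<le> J" using J j by simp
  have Z: "0 < Z" "Z \<le> 1" "sqrt (eta_floor j \<theta>) \<le> Z" unfolding Z_def using \<zeta> cst(2) by auto
  have "p / Z \<le> (J + 2) / sqrt (eta_floor j \<theta>)"
    using p Z cst(2) J3 by (intro frac_le) auto
  then have SZ: "0 \<le> p / Z + Z" "p / Z + Z \<le> C"
    unfolding C_def sz_bound_def J using p Z by auto
  have "\<tau> * (p / Z + Z) \<le> \<tau> * C" using SZ \<tau> by (intro mult_left_mono) auto
  also have "\<dots> \<le> tau_cap j \<theta> * C" unfolding C_def using \<tau> cst(5) by (intro mult_right_mono) auto
  also have "\<dots> \<le> 1" unfolding C_def by (rule cst(8))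
  finally have "exp (\<tau> * (p / Z + Z)) - 1 \<le> 3 * (\<tau> * (p / Z + Z))"
    using SZ \<tau> by (intro exp_minus_one_le_three) auto
  also have "\<dots> \<le> 3 * (\<tau> * C)" using SZ \<tau> by (simp add: mult_left_mono)
  finally have exp_err: "exp (\<tau> * (p / Z + Z)) - 1 \<le> 3 * (\<tau> * C)" .
  have "0 \<le> exp (\<tau> * (p / Z + Z)) - 1" using SZ \<tau> by simp
  then have err1: "J * (p + \<zeta> / 2) * (exp (\<tau> * (p / Z + Z)) - 1) \<le> J * (J + 3) * (3 * (\<tau> * C))"
    using p \<zeta> exp_err J3 cst(2) by (intro mult_mono) auto
  have "\<tau> * \<tau> \<le> 1 * \<tau>" using \<tau> cst(10) by (intro mult_right_mono) auto
  then have "B / N \<le> \<tau>" using BN by (simp add: power2_eq_square)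
  moreover have "(p + 1)\<^sup>2 \<le> (J + 3)\<^sup>2" using p by (intro power_mono) auto
  ultimately have "(p + 1)\<^sup>2 * (B / N) \<le> (J + 3)\<^sup>2 * \<tau>" using BN by (intro mult_mono) auto
  then have err2: "2 * J * (p + 1)\<^sup>2 * B / N \<le> 2 * J * (J + 3)\<^sup>2 * \<tau>"
    using J3 mult_left_mono[of "(p + 1)\<^sup>2 * (B / N)" "(J + 3)\<^sup>2 * \<tau>" "2 * J"] by simp
  have "(3 * J * (J + 3) * C + 2 * J * (J + 3)\<^sup>2) * \<tau> \<le> (3 * J * (J + 3) * C + 2 * J * (J + 3)\<^sup>2) * tau_cap j \<theta>"
    using \<tau> J3 cst(5) unfolding C_def by (intro mult_left_mono) auto
  also have "\<dots> \<le> (J - 2) * gap \<theta> / 8" using cst(9) unfolding C_def J .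
  finally have "J * (J + 3) * (3 * (\<tau> * C)) + 2 * J * (J + 3)\<^sup>2 * \<tau> \<le> (J - 2) * gap \<theta> / 8"
    by (simp add: algebra_simps)
  then show ?thesis using err1 err2 unfolding Z_def by linarith
qed

lemma small_ratio_exponent:
  fixes J K N B p D :: real
  assumes j: "3 \<le> j" and J: "J = real j" and th: "0 < \<theta>" "\<theta> < 1"
    and K: "J + 3 \<le> K" and N: "0 < N" and B: "1 \<le> B" and p: "0 \<le> p" "p \<le> J + 2"
    and KBN: "K * B / N \<le> (tau_cap j \<theta>)\<^sup>2"
    and D: "D = ln B - ln N + (J / (J - 2)) * ln K - ln (beta_bar j)" and D_gap: "D \<le> - gap \<theta>"
  obtains x y where "0 \<le> x" "0 < y" "p = 0 \<or> 0 < x"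
    "saddle_exponent J K N (p * B) B x y \<le> B * (D / 4)"
proof -
  note cst = cutoff_constants[OF j th]
  define \<eta> \<zeta> \<tau> where "\<eta> = eta_floor j \<theta>" and "\<zeta> = max (1 - p) \<eta>" and "\<tau> = sqrt (K * B / N)"
  define x y where "x = sqrt (B / (K * N)) * (p / sqrt \<zeta>)" and "y = sqrt (B / (K * N)) * sqrt \<zeta>"
  have J3: "3 \<le> J" using J j by simp
  have \<eta>: "0 < \<eta>" "\<eta> \<le> exp (-1)" unfolding \<eta>_def using cst(2,3) by simp_all
  have \<eta>_le: "\<eta> \<le> 1" using \<eta>(2) by (meson exp_le_one_iff neg_le_0_iff_le order.trans zero_le_one)
  have ln_\<eta>: "ln \<eta> \<le> -1" using \<eta> by (metis ln_exp ln_le_cancel_iff exp_gt_zero)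
  have \<zeta>: "0 < \<zeta>" "\<zeta> \<le> 1" "\<eta> \<le> \<zeta>" unfolding \<zeta>_def using \<eta> \<eta>_le p by auto
  have "\<tau> \<le> sqrt ((tau_cap j \<theta>)\<^sup>2)" unfolding \<tau>_def using KBN by (rule real_sqrt_le_mono)
  then have \<tau>: "0 \<le> \<tau>" "\<tau> \<le> tau_cap j \<theta>" "\<tau>\<^sup>2 = K * B / N"
    unfolding \<tau>_def using cst(6) K J3 B N by auto
  have BN: "0 \<le> B / N" "B / N \<le> \<tau>\<^sup>2"
    unfolding \<tau>(3) using K J3 B N by (auto simp: field_simps)
  have "(tau_cap j \<theta>)\<^sup>2 \<le> (1 / 12) * (1 / 12)"
    unfolding power2_eq_square using cst(6,10) by (intro mult_mono) auto
  then have "(tau_cap j \<theta>)\<^sup>2 \<le> 1 / 2" by simp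
  moreover have "(p + 1) * B / N \<le> K * B / N" using p K B N by (intro divide_right_mono mult_right_mono) auto
  ultimately have small: "(p + 1) * B / N \<le> 1 / 2" using KBN by linarith
  have exponent: "saddle_exponent J K N (p * B) B x y
    \<le> B * ((p + 1) * (((J - 2) / 2) * (ln B - ln N) + (J / 2) * ln K) - p * ln p - (J - 1) * (p + 1)
           + (J / 2) * (p - 1) * ln \<zeta> + J * (p + \<zeta> / 2) * exp (\<tau> * (p / sqrt \<zeta> + sqrt \<zeta>))
           + 2 * J * (p + 1)\<^sup>2 * B / N)"
    unfolding \<tau>_def using J3 K B by (intro saddle_exponent_small_ratio[OF J3 _ N _ p(1) \<zeta>(1) small x_def y_def]) auto
  have main: "(p + 1) * ((J - 2) / 2) * (D + ln (beta_bar j)) - p * ln p - (J - 1) * (p + 1)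
      + (J / 2) * (p - 1) * ln \<zeta> + J * (p + \<zeta> / 2) \<le> ((J - 2) / 2) * D + J * \<eta> / 2"
    using cst(1) D_gap
    by (intro small_ratio_main_term[OF J j p(1) \<eta>(1) ln_\<eta> beta_bar_props(2,3)[OF j] _ \<zeta>_def]) auto
  have log_terms: "(p + 1) * (((J - 2) / 2) * (ln B - ln N) + (J / 2) * ln K)
      = (p + 1) * ((J - 2) / 2) * (D + ln (beta_bar j))"
    unfolding D using J3 by (simp add: field_simps)
  have perturbation: "J * (p + \<zeta> / 2) * (exp (\<tau> * (p / sqrt \<zeta> + sqrt \<zeta>)) - 1) + 2 * J * (p + 1)\<^sup>2 * B / N
      \<le> (J - 2) * gap \<theta> / 8"
    using \<zeta> \<tau> BN unfolding \<eta>_def by (intro small_ratio_perturbation[OF j J th p]) auto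
  have "J * \<eta> / 2 \<le> (J - 2) * gap \<theta> / 8" using cst(4) unfolding \<eta>_def J .
  moreover have "((J - 2) / 2) * D + (J - 2) * gap \<theta> / 4 \<le> D / 4"
  proof -
    have "(J - 2) * gap \<theta> \<le> (J - 2) * (- D)" using D_gap J3 by (intro mult_left_mono) auto
    moreover have "(J - 3) * D \<le> 0" using J3 D_gap cst(1) by (simp add: mult_nonneg_nonpos)
    ultimately show ?thesis by (simp add: field_simps)
  qed
  moreover have "J * (p + \<zeta> / 2) * exp (\<tau> * (p / sqrt \<zeta> + sqrt \<zeta>))
      = J * (p + \<zeta> / 2) + J * (p + \<zeta> / 2) * (exp (\<tau> * (p / sqrt \<zeta> + sqrt \<zeta>)) - 1)"
    by (simp add: algebra_simps)
  ultimately have "(p + 1) * (((J - 2) / 2) * (ln B - ln N) + (J / 2) * ln K) - p * ln p - (J - 1) * (p + 1)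
           + (J / 2) * (p - 1) * ln \<zeta> + J * (p + \<zeta> / 2) * exp (\<tau> * (p / sqrt \<zeta> + sqrt \<zeta>))
           + 2 * J * (p + 1)\<^sup>2 * B / N \<le> D / 4"
    using main log_terms perturbation by linarith
  then have "saddle_exponent J K N (p * B) B x y \<le> B * (D / 4)"
    using exponent B by (meson mult_left_mono order.trans zero_le_one)
  moreover have "0 < sqrt (B / (K * N))" using B N K J3 by simp
  then have "0 \<le> x" "0 < y" "p = 0 \<or> 0 < x"
    unfolding x_def y_def using p \<zeta> by (auto intro!: mult_pos_pos divide_pos_pos)
  ultimately show thesis using that by blast
qed

lemma large_ratio_exponent:
  fixes J K N B p D :: real
  assumes j: "3 \<le> j" and J: "J = real j" and K: "2 \<le> K" and K_log: "2 * (J + 2) \<le> ln K"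
    and N: "0 < N" and B: "1 \<le> B" and p: "J + 2 \<le> p" "p \<le> K - 1"
    and KBN: "K * B / N \<le> 1 / (4 * J)"
    and D: "D = ln B - ln N + (J / (J - 2)) * ln K - ln (beta_bar j)" and D0: "D \<le> 0"
  obtains x y where "0 < x" "0 < y" "saddle_exponent J K N (p * B) B x y \<le> B * (D / 4)"
proof -
  define x y where "x = p / (K - 1)" and "y = exp (- p) * B / N"
  have J3: "3 \<le> J" using J j by simp
  have p1: "1 \<le> p" using p J3 by simp
  have "1 / (4 * J) \<le> 1 / 2" using J3 by (simp add: field_simps)
  then have small: "K * B / N \<le> 1 / 2" using KBN by linarith
  have exponent: "saddle_exponent J K N (p * B) B x y \<le> B * (((J - 1) * p - 1) * (ln B - ln N)
      - p * ln p + p + J + 1 + J * p * ln (K - 1) + 2 * J * (p + 1)\<^sup>2 * B / N)"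
    using B by (intro saddle_exponent_large_ratio[OF J3 K N _ p1 p(2) small x_def y_def]) auto
  have "(p + 1)\<^sup>2 \<le> (2 * p) * K" unfolding power2_eq_square using p1 p(2) by (intro mult_mono) auto
  then have "2 * J * (p + 1)\<^sup>2 * B / N \<le> 2 * J * ((2 * p) * K) * B / N"
    using J3 B N by (intro divide_right_mono mult_right_mono mult_left_mono) auto
  also have "\<dots> = 4 * J * p * (K * B / N)" by (simp add: field_simps)
  also have "\<dots> \<le> 4 * J * p * (1 / (4 * J))" using KBN J3 p1 by (intro mult_left_mono) auto
  also have "\<dots> = p" using J3 by simp
  finally have error: "2 * J * (p + 1)\<^sup>2 * B / N \<le> p" .
  have "((J - 1) * p - 1) * (ln B - ln N) - p * ln p + p + J + 1
        + J * p * ln (K - 1) + 2 * J * (p + 1)\<^sup>2 * B / N \<le> D - 1"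
    by (rule large_ratio_main_term[OF J3 K p(1) K_log beta_bar_props(2)[OF j] D0 D error])
  also have "\<dots> \<le> D / 4" using D0 by simp
  finally have "saddle_exponent J K N (p * B) B x y \<le> B * (D / 4)"
    using exponent B by (meson mult_left_mono order.trans zero_le_one)
  moreover have "0 < x" "0 < y" unfolding x_def y_def using p1 K B N by auto
  ultimately show thesis using that by blast
qed

definition log_weight :: "nat \<Rightarrow> nat \<Rightarrow> nat \<Rightarrow> nat \<Rightarrow> real" where
  "log_weight j k n b = ln (real b) - ln (real n) + (real j / (real j - 2)) * ln (real k) - ln (beta_bar j)"

lemma window_facts:
  assumes j: "3 \<le> j" and th: "0 < \<theta>" "\<theta> < 1" and k: "large_k j \<theta> k"
    and b: "1 \<le> b" and b_le: "real b \<le> \<theta> * beta_bar j * (real k - 1) powr (- real j / (real j - 2)) * real n"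
  shows "0 < n" and "real k * real b / real n \<le> (tau_cap j \<theta>)\<^sup>2" and "log_weight j k n b \<le> - gap \<theta>"
proof -
  define W where "W = (real k - 1) powr (- real j / (real j - 2))"
  have k_big: "real j + 3 \<le> real k" and shift: "(real j / (real j - 2)) * (ln (real k) - ln (real k - 1)) \<le> gap \<theta>"
    and density: "real k * (\<theta> * beta_bar j * W) \<le> (tau_cap j \<theta>)\<^sup>2"
    using k unfolding large_k_def W_def by auto
  have W: "0 < W" unfolding W_def using k_big by simp
  have \<beta>: "0 < beta_bar j" by (rule beta_bar_props(1)[OF j])
  have b_le': "real b \<le> \<theta> * beta_bar j * W * real n" using b_le unfolding W_def .
  show n: "0 < n" using b_le' b by (cases n) auto
  have "real k * real b \<le> real k * (\<theta> * beta_bar j * W * real n)" using b_le' by (intro mult_left_mono) auto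
  then have "real k * real b / real n \<le> real k * (\<theta> * beta_bar j * W)" using n by (simp add: field_simps)
  then show "real k * real b / real n \<le> (tau_cap j \<theta>)\<^sup>2" using density by linarith
  have "ln (real b) \<le> ln (\<theta> * beta_bar j * W * real n)" using b_le' b by (subst ln_le_cancel_iff) auto
  also have "\<dots> = ln \<theta> + ln (beta_bar j) - (real j / (real j - 2)) * ln (real k - 1) + ln (real n)"
    unfolding W_def using th \<beta> W n k_big by (simp add: ln_mult ln_powr)
  finally have "log_weight j k n b \<le> ln \<theta> + ((real j / (real j - 2)) * ln (real k)
      - (real j / (real j - 2)) * ln (real k - 1))"
    unfolding log_weight_def by linarith
  then have "log_weight j k n b \<le> ln \<theta> + (real j / (real j - 2)) * (ln (real k) - ln (real k - 1))"
    by (simp only: right_diff_distrib)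
  then show "log_weight j k n b \<le> - gap \<theta>" using shift unfolding gap_def by simp
qed

lemma E_term_bound:
  assumes j: "3 \<le> j" and th: "0 < \<theta>" "\<theta> < 1" and k: "large_k j \<theta> k" and kn: "k dvd n"
    and b: "1 \<le> b" and b_le: "real b \<le> \<theta> * beta_bar j * (real k - 1) powr (- real j / (real j - 2)) * real n"
    and a: "a \<le> (k - 1) * b"
  shows "E_val n j k a b \<le> exp (2 + ln (real (j * a) + 1) + ln (real (j * b) + 1)
            + real b * log_weight j k n b / 4)"
proof -
  note window = window_facts[OF j th k b b_le]
  note cst = cutoff_constants[OF j th]
  define J K N B p where "J = real j" and "K = real k" and "N = real n" and "B = real b"
    and "p = real a / real b"
  have J3: "3 \<le> J" and B: "1 \<le> B" and N: "0 < N" unfolding J_def B_def N_def using j b window(1) by simp_all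
  have K: "J + 3 \<le> K" "2 * (J + 2) \<le> ln K" using k unfolding large_k_def J_def K_def by simp_all
  have pB: "p * B = real a" and p0: "0 \<le> p" unfolding p_def B_def using b by simp_all
  have "1 \<le> k" using K J3 unfolding K_def by simp
  have "real a \<le> real ((k - 1) * b)" using a by (simp only: of_nat_le_iff)
  also have "\<dots> = (K - 1) * B" unfolding K_def B_def using \<open>1 \<le> k\<close> by (simp add: of_nat_diff)
  finally have "real a \<le> (K - 1) * B" .
  then have pK: "p \<le> K - 1" unfolding p_def B_def using b by (simp add: divide_le_eq)
  have KBN: "K * B / N \<le> (tau_cap j \<theta>)\<^sup>2" using window(2) unfolding K_def B_def N_def .
  have "(tau_cap j \<theta>)\<^sup>2 \<le> tau_cap j \<theta> * 1" unfolding power2_eq_square using cst(6,10) by (intro mult_left_mono) auto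
  then have KBN': "K * B / N \<le> 1 / (4 * J)" using KBN cst(7) unfolding J_def by linarith
  have "1 / (4 * J) \<le> 1 / 2" using J3 by (simp add: field_simps)
  then have "K * B / N \<le> 1 / 2" using KBN' by linarith
  then have "K * B \<le> N / 2" using N by (simp add: field_simps)
  moreover have "(K - 1) * B + B = K * B" by (simp add: algebra_simps)
  ultimately have "real a + B < N" using \<open>real a \<le> (K - 1) * B\<close> N by linarith
  then have abn: "a + b < n" unfolding B_def N_def by linarith
  have D: "log_weight j k n b = ln B - ln N + (J / (J - 2)) * ln K - ln (beta_bar j)"
    unfolding log_weight_def J_def K_def N_def B_def ..
  obtain x y where xy: "0 \<le> x" "0 < y" "a = 0 \<or> 0 < x"
    and exponent: "saddle_exponent J K N (real a) B x y \<le> B * (log_weight j k n b / 4)"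
  proof (cases "p \<le> J + 2")
    case True
    obtain x y where "0 \<le> x" "0 < y" "p = 0 \<or> 0 < x"
      "saddle_exponent J K N (p * B) B x y \<le> B * (log_weight j k n b / 4)"
      by (rule small_ratio_exponent[OF j J_def th K(1) N B p0 True KBN D window(3)])
    moreover have "p = 0 \<longleftrightarrow> a = 0" unfolding p_def using b by simp
    ultimately show ?thesis using that pB by auto
  next
    case False
    have "2 \<le> K" "J + 2 \<le> p" "log_weight j k n b \<le> 0" using K J3 False cst(1) window(3) by auto
    then obtain x y where "0 < x" "0 < y" "saddle_exponent J K N (p * B) B x y \<le> B * (log_weight j k n b / 4)"
      using large_ratio_exponent[OF j J_def _ K(2) N B _ pK KBN' D] by blast
    then show ?thesis using pB by (intro that[of x y]) auto
  qed
  have "E_val n j k a b \<le> exp (2 + ln (real (j * a) + 1) + ln (real (j * b) + 1) + saddle_exponent J K N (real a) B x y)"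
    unfolding J_def K_def N_def B_def using J3 K j
    by (intro E_le_saddle[OF abn _ _ kn xy]) (auto simp: J_def K_def)
  also have "\<dots> \<le> exp (2 + ln (real (j * a) + 1) + ln (real (j * b) + 1) + real b * log_weight j k n b / 4)"
    using exponent unfolding B_def by simp
  finally show ?thesis .
qed

definition k_factor :: "nat \<Rightarrow> nat \<Rightarrow> real" where
  "k_factor j k = exp (((real j / (real j - 2)) * ln (real k) - ln (beta_bar j)) / 8)"

lemma E_term_decay:
  assumes j: "3 \<le> j" and th: "0 < \<theta>" "\<theta> < 1" and k: "large_k j \<theta> k" and kn: "k dvd n"
    and b: "1 \<le> b" and b_le: "real b \<le> \<theta> * beta_bar j * (real k - 1) powr (- real j / (real j - 2)) * real n"
    and a: "a \<le> (k - 1) * b"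
  shows "E_val n j k a b \<le> 2 * exp 2 * (real j)\<^sup>2 * real k * k_factor j k * real b ^ 3
            * exp (- (gap \<theta> / 8) * real b) * exp (- ln (real n) / 8)"
proof -
  define D where "D = log_weight j k n b"
  have D_gap: "D \<le> - gap \<theta>" unfolding D_def by (rule window_facts(3)[OF j th k b b_le])
  have gap: "0 < gap \<theta>" using cutoff_constants(1)[OF j th] .
  have k2: "2 \<le> k" using k j unfolding large_k_def by simp
  have B1: "1 \<le> real b" using b by simp
  have "1 * 1 \<le> real j * real b" using b j by (intro mult_mono) auto
  then have jb: "1 \<le> real j * real b" by simp
  have "real a \<le> real ((k - 1) * b)" using a by (simp only: of_nat_le_iff)
  then have "real a \<le> (real k - 1) * real b" using k2 by (simp add: of_nat_diff)
  then have "real j * real a \<le> real j * ((real k - 1) * real b)" by (intro mult_left_mono) auto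
  then have factor_a: "real (j * a) + 1 \<le> real j * real k * real b" using jb by (simp add: algebra_simps)
  have factor_b: "real (j * b) + 1 \<le> 2 * real j * real b" using jb by (simp add: mult.commute)
  have "exp (ln (real b) / 8) \<le> exp (ln (real b))"
    by (simp only: exp_le_cancel_iff) (use B1 in simp)
  then have b_root: "exp (ln (real b) / 8) \<le> real b" using B1 by simp
  have "real b * D \<le> 1 * D" using B1 D_gap gap by (intro mult_right_mono_neg) auto
  moreover have "real b * D \<le> real b * (- gap \<theta>)" using B1 D_gap by (intro mult_left_mono) auto
  ultimately have "exp (real b * D / 4) \<le> exp (D / 8) * exp (- (gap \<theta> / 8) * real b)"
    by (simp add: exp_add[symmetric])
  also have "exp (D / 8) = exp (ln (real b) / 8) * k_factor j k * exp (- ln (real n) / 8)"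
    unfolding D_def log_weight_def k_factor_def by (simp add: exp_add[symmetric] exp_diff[symmetric] field_simps)
  also have "exp (ln (real b) / 8) \<le> real b" using b_root .
  finally have decay: "exp (real b * D / 4)
      \<le> real b * k_factor j k * exp (- ln (real n) / 8) * exp (- (gap \<theta> / 8) * real b)"
    by (simp add: k_factor_def mult_right_mono)
  have positive: "0 < real (j * a) + 1" "0 < real (j * b) + 1"
    using of_nat_0_le_iff[of "j * a"] of_nat_0_le_iff[of "j * b"] by linarith+
  have "E_val n j k a b \<le> exp (2 + ln (real (j * a) + 1) + ln (real (j * b) + 1) + real b * D / 4)"
    unfolding D_def by (rule E_term_bound[OF j th k kn b b_le a])
  also have "\<dots> = exp 2 * (real (j * a) + 1) * (real (j * b) + 1) * exp (real b * D / 4)"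
    unfolding exp_add using exp_ln[OF positive(1)] exp_ln[OF positive(2)] by simp
  also have "\<dots> \<le> exp 2 * (real j * real k * real b) * (2 * real j * real b)
      * (real b * k_factor j k * exp (- ln (real n) / 8) * exp (- (gap \<theta> / 8) * real b))"
    using factor_a factor_b decay by (intro mult_mono) auto
  also have "\<dots> = 2 * exp 2 * (real j)\<^sup>2 * real k * k_factor j k * real b ^ 3
            * exp (- (gap \<theta> / 8) * real b) * exp (- ln (real n) / 8)"
    by (simp add: power2_eq_square power3_eq_cube algebra_simps)
  finally show ?thesis .
qed

(* Summing over a: only a <= (k-1) b contribute. *)
lemma column_sum_bound:
  assumes j: "3 \<le> j" and th: "0 < \<theta>" "\<theta> < 1" and k: "large_k j \<theta> k" and kn: "k dvd n"
    and b: "1 \<le> b" and b_le: "real b \<le> \<theta> * beta_bar j * (real k - 1) powr (- real j / (real j - 2)) * real n"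
  shows "(\<Sum>a=0..n - b. E_val n j k a b) \<le> 2 * exp 2 * (real j)\<^sup>2 * (real k)\<^sup>2 * k_factor j k * real b ^ 4
            * exp (- (gap \<theta> / 8) * real b) * exp (- ln (real n) / 8)"
proof -
  define T where "T = 2 * exp 2 * (real j)\<^sup>2 * real k * k_factor j k * real b ^ 3
    * exp (- (gap \<theta> / 8) * real b) * exp (- ln (real n) / 8)"
  define A where "A = {a \<in> {0..n - b}. a \<le> (k - 1) * b}"
  have k2: "2 \<le> k" using k j unfolding large_k_def by simp
  have T0: "0 \<le> T" unfolding T_def k_factor_def by simp
  have "E_val n j k a b \<le> (if a \<le> (k - 1) * b then T else 0)" for a
    using E_term_decay[OF j th k kn b b_le, of a] E_vanishes[of j k b a n] j unfolding T_def by auto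
  then have "(\<Sum>a=0..n - b. E_val n j k a b) \<le> (\<Sum>a=0..n - b. (if a \<le> (k - 1) * b then T else 0))"
    by (rule sum_mono)
  also have "\<dots> = real (card A) * T" unfolding A_def by (simp add: sum.inter_filter[symmetric])
  also have "\<dots> \<le> real (k * b) * T"
  proof -
    have "card A \<le> card {0..(k - 1) * b}" unfolding A_def by (intro card_mono) auto
    also have "\<dots> \<le> k * b" using k2 b by (cases k) auto
    finally have "real (card A) \<le> real (k * b)" by (simp only: of_nat_le_iff)
    then show ?thesis using T0 by (intro mult_right_mono) auto
  qed
  also have "\<dots> = 2 * exp 2 * (real j)\<^sup>2 * (real k)\<^sup>2 * k_factor j k * real b ^ 4
            * exp (- (gap \<theta> / 8) * real b) * exp (- ln (real n) / 8)"
    unfolding T_def by (simp add: power2_eq_square power3_eq_cube power4_eq_xxxx algebra_simps)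
  finally show ?thesis .
qed

lemma power_times_exp_decay:
  fixes u b :: real
  assumes u: "0 < u" and b: "0 \<le> b"
  shows "b ^ 4 * exp (- u * b) \<le> (8 / u) ^ 4 * exp (- (u / 2) * b)"
proof -
  have "u * b / 8 \<le> exp (u * b / 8)" using exp_ge_add_one_self[of "u * b / 8"] by linarith
  then have "(u * b / 8) ^ 4 \<le> exp (u * b / 8) ^ 4" using u b by (intro power_mono) auto
  also have "\<dots> = exp (u * b / 2)" by (simp add: exp_of_nat_mult[symmetric])
  finally have polynomial: "(u * b / 8) ^ 4 \<le> exp (u * b / 2)" .
  have "b ^ 4 = (8 / u) ^ 4 * (u * b / 8) ^ 4" using u by (simp add: field_simps)
  also have "\<dots> \<le> (8 / u) ^ 4 * exp (u * b / 2)" using polynomial u by (intro mult_left_mono) auto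
  finally have "b ^ 4 * exp (- u * b) \<le> (8 / u) ^ 4 * exp (u * b / 2) * exp (- u * b)"
    by (intro mult_right_mono) auto
  also have "\<dots> = (8 / u) ^ 4 * exp (- (u / 2) * b)" by (simp add: mult.assoc exp_add[symmetric])
  finally show ?thesis .
qed

lemma geometric_sum_bound:
  assumes "0 < u" and "finite B"
  shows "(\<Sum>b\<in>B. exp (- (u / 2) * real b)) \<le> 1 / (1 - exp (- u / 2))"
proof -
  define q where "q = exp (- u / 2)"
  have q: "0 < q" "q < 1" unfolding q_def using assms by auto
  have "exp (- (u / 2) * real b) = q ^ b" for b
    unfolding q_def by (simp add: exp_of_nat_mult[symmetric] mult.commute)
  moreover have "(\<Sum>b\<in>B. q ^ b) \<le> (\<Sum>b. q ^ b)"
    by (rule sum_le_suminf) (use q assms in \<open>auto intro: summable_geometric\<close>)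
  moreover have "(\<Sum>b. q ^ b) = 1 / (1 - q)" using q by (simp add: suminf_geometric)
  ultimately show ?thesis unfolding q_def by simp
qed

definition sum_constant :: "nat \<Rightarrow> real \<Rightarrow> nat \<Rightarrow> real" where
  "sum_constant j \<theta> k = 2 * exp 2 * (real j)\<^sup>2 * (real k)\<^sup>2 * k_factor j k * (8 / (gap \<theta> / 8)) ^ 4
      / (1 - exp (- (gap \<theta> / 8) / 2))"

lemma window_sum_bound:
  assumes j: "3 \<le> j" and th: "0 < \<theta>" "\<theta> < 1" and k: "large_k j \<theta> k" and kn: "k dvd n"
  shows "(\<Sum>b=1..nat \<lfloor>\<theta> * beta_bar j * (real k - 1) powr (- real j / (real j - 2)) * real n\<rfloor>.
              \<Sum>a=0..n - b. E_val n j k a b) \<le> sum_constant j \<theta> k * exp (- ln (real n) / 8)"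
proof -
  define v where "v = \<theta> * beta_bar j * (real k - 1) powr (- real j / (real j - 2)) * real n"
  define u where "u = gap \<theta> / 8"
  define c where "c = 2 * exp 2 * (real j)\<^sup>2 * (real k)\<^sup>2 * k_factor j k * exp (- ln (real n) / 8)"
  have u: "0 < u" unfolding u_def using cutoff_constants(1)[OF j th] by simp
  have c: "0 \<le> c" unfolding c_def k_factor_def by simp
  have in_window: "1 \<le> b \<and> real b \<le> v" if "b \<in> {1..nat \<lfloor>v\<rfloor>}" for b
  proof -
    have "int b \<le> \<lfloor>v\<rfloor>" using that by auto
    then show ?thesis using that by (simp add: le_floor_iff)
  qed
  have "(\<Sum>b=1..nat \<lfloor>v\<rfloor>. \<Sum>a=0..n - b. E_val n j k a b) \<le> (\<Sum>b=1..nat \<lfloor>v\<rfloor>. c * (real b ^ 4 * exp (- u * real b)))"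
    using column_sum_bound[OF j th k kn] in_window unfolding c_def u_def v_def
    by (intro sum_mono) (simp add: algebra_simps)
  also have "\<dots> \<le> (\<Sum>b=1..nat \<lfloor>v\<rfloor>. c * ((8 / u) ^ 4 * exp (- (u / 2) * real b)))"
    by (intro sum_mono mult_left_mono power_times_exp_decay u c) auto
  also have "\<dots> = c * (8 / u) ^ 4 * (\<Sum>b=1..nat \<lfloor>v\<rfloor>. exp (- (u / 2) * real b))"
    by (simp add: sum_distrib_left mult.assoc)
  also have "\<dots> \<le> c * (8 / u) ^ 4 * (1 / (1 - exp (- u / 2)))"
    by (intro mult_left_mono geometric_sum_bound u) (use c in auto)
  also have "\<dots> = sum_constant j \<theta> k * exp (- ln (real n) / 8)"
    unfolding sum_constant_def c_def u_def by (simp add: field_simps)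
  finally show ?thesis unfolding v_def .
qed

theorem theorem7:
  fixes j :: nat and \<theta> :: real
  assumes "j \<ge> 3" and "0 < \<theta>" and "\<theta> < 1"
  shows "\<exists>K::nat. \<forall>k\<ge>K.
    ((\<lambda>n. \<Sum>b=1..nat \<lfloor>\<theta> * beta_bar j * (real k - 1) powr (- real j / (real j - 2)) * real n\<rfloor>.
              \<Sum>a=0..n - b. E_val n j k a b)
      \<longlongrightarrow> 0) (inf sequentially (principal {n. k dvd n}))"
proof -
  obtain K where K: "\<forall>k\<ge>K. large_k j \<theta> k" using large_k_eventually[OF assms] by blast
  have "((\<lambda>n. \<Sum>b=1..nat \<lfloor>\<theta> * beta_bar j * (real k - 1) powr (- real j / (real j - 2)) * real n\<rfloor>.
              \<Sum>a=0..n - b. E_val n j k a b) \<longlongrightarrow> 0) (inf sequentially (principal {n. k dvd n}))"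
    if "K \<le> k" for k
  proof (rule tendsto_sandwich[where f = "\<lambda>_. 0" and h = "\<lambda>n. sum_constant j \<theta> k * exp (- ln (real n) / 8)"])
    have "((\<lambda>n::nat. sum_constant j \<theta> k * exp (- ln (real n) / 8)) \<longlongrightarrow> 0) sequentially" by real_asymp
    then show "((\<lambda>n::nat. sum_constant j \<theta> k * exp (- ln (real n) / 8)) \<longlongrightarrow> 0)
        (inf sequentially (principal {n. k dvd n}))"
      by (rule tendsto_mono[rotated]) simp
    show "eventually (\<lambda>n. (\<Sum>b=1..nat \<lfloor>\<theta> * beta_bar j * (real k - 1) powr (- real j / (real j - 2)) * real n\<rfloor>.
        \<Sum>a=0..n - b. E_val n j k a b) \<le> sum_constant j \<theta> k * exp (- ln (real n) / 8))
        (inf sequentially (principal {n. k dvd n}))"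
      unfolding eventually_inf_principal using window_sum_bound[OF assms] K that by auto
  qed (auto intro!: always_eventually sum_nonneg E_nonneg)
  then show ?thesis by blast
qed

end
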